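(* Consider the setting described in the context, with distinct treatments $s\neq t$. Assume (C1), (C2), (C3), that $X$ and $XY^{(\ell)}$, $\ell=1,\dots,k$, have finite second-order moments, and that ${\rm var}(X\mid Z=z)$ is positive definite for every $z\in\mathcal Z$. Define \begin{align*} \widehat\sigma_U^2&=\sum_{z\in\mathcal Z}\frac{n(z)}{n}\Big\{\frac{S_t^2(z)}{\pi_t}+\frac{S_s^2(z)}{\pi_s}\Big\},\qquad \widehat\sigma_V^2=\sum_{z\in\mathcal Z}\frac{n(z)}{n}\{\bar Y_t(z)-\bar Y_s(z)\}^2-\widehat\theta^2,\\ \widehat\sigma_A^2&=\sum_{z\in\mathcal Z}\frac{n(z)}{n}\Big[\frac{S_{t,A}^2(z)}{\pi_t}+\frac{S_{s,A}^2(z)}{\pi_s}+\{\widehat\beta_t(z)-\widehat\beta_s(z)\}^T\widehat\Sigma(z)\{\widehat\beta_t(z)-\widehat\beta_s(z)\}\Big],\\ \widehat\sigma_B^2&=\sum_{z\in\mathcal Z}\frac{n(z)}{n}\Big\{\frac{S_{t,B}^2(z)}{\pi_t}+\frac{S_{s,B}^2(z)}{\pi_s}\Big\}. \end{align*} Then, as $n\to\infty$, $\widehat\sigma_U^2\to\sigma_U^2$, $\widehat\sigma_V^2\to\sigma_V^2$, $\widehat\sigma_A^2\to\sigma_A^2$, and $\widehat\sigma_B^2\to\sigma_B^2$ in probability, where, with $\beta_\ell(z)=\{{\rm var}(X\mid Z=z)\}^{-1}{\rm cov}(X,Y^{(\ell)}\mid Z=z)$ and $\beta(z)=\sum_{\ell=1}^k\pi_\ell\beta_\ell(z)$,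 \begin{align*} \sigma_U^2&=E\{{\rm var}(Y^{(t)}\mid Z)/\pi_t+{\rm var}(Y^{(s)}\mid Z)/\pi_s\},\qquad \sigma_V^2={\rm var}\{E(Y^{(t)}-Y^{(s)}\mid Z)\},\\ \sigma_A^2&=E[{\rm var}\{Y^{(t)}-X^T\beta_t(Z)\mid Z\}/\pi_t+{\rm var}\{Y^{(s)}-X^T\beta_s(Z)\mid Z\}/\pi_s]+E[\{\beta_t(Z)-\beta_s(Z)\}^T{\rm var}(X\mid Z)\{\beta_t(Z)-\beta_s(Z)\}],\\ \sigma_B^2&=E[{\rm var}\{Y^{(t)}-X^T\beta(Z)\mid Z\}/\pi_t+{\rm var}\{Y^{(s)}-X^T\beta(Z)\mid Z\}/\pi_s]. \end{align*}
   Context: Setting: a trial compares $k\ge2$ treatments (fixed) with known assignment proportions $\pi_1,\dots,\pi_k\in(0,1)$, $\sum_t\pi_t=1$. Let $e_t$ be the $t$-th unit vector in $\mathbb R^k$. For patient $i=1,\dots,n$: $I_i\in\{e_1,\dots,e_k\}$ is the treatment indicator, $Y_i^{(1)},\dots,Y_i^{(k)}$ are potential responses, $W_i$ the observed covariate vector, $Z_i$ a discrete function of $W_i$ used in randomization, $X_i$ a vector-valued function of $W_i$. Observed $Y_i=Y_i^{(t)}$ iff $I_i=e_t$. Generic variables $(Y^{(1)},\dots,Y^{(k)},W)$, $Z$, $X$. Conditions: (C1) $(Y_i^{(1)},\dots,Y_i^{(k)},W_i)$, $i=1,\dots,n$, are i.i.d. as $(Y^{(1)},\dots,Y^{(k)},W)$,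 each $Y^{(t)}$ with finite second moments. (C2) $(I_1,\dots,I_n)$ and $\{(Y_i^{(1)},\dots,Y_i^{(k)},W_i)\}_{i}$ are conditionally independent given $Z_1,\dots,Z_n$. (C3) $Z$ takes finitely many values in $\mathcal Z$; ${\rm pr}(I_i=e_t\mid Z_1,\dots,Z_n)=\pi_t$ for all $t,i$; and for every $z\in\mathcal Z$ and $t$, $D_t(z)/n(z)\to0$ in probability, where $n(z)=\#\{i:Z_i=z\}$, $n_t(z)=\#\{i:Z_i=z,I_i=e_t\}$, $D_t(z)=n_t(z)-\pi_tn(z)$. Estimators: $\bar Y_t(z)$, $\bar X_t(z)$ are the sample means of $Y_i$, $X_i$ over $\{i:I_i=e_t,Z_i=z\}$; $\widehat\theta=\sum_{z}\frac{n(z)}{n}\{\bar Y_t(z)-\bar Y_s(z)\}$; $\widehat\beta_t(z)=\big[\sum_{i:I_i=e_t,Z_i=z}\{X_i-\bar X_t(z)\}\{X_i-\bar X_t(z)\}^T\big]^{-1}\sum_{i:I_i=e_t,Z_i=z}\{X_i-\bar X_t(z)\}Y_i$; $\widehat\beta(z)=\big[\sum_{\ell=1}^k\sum_{i:I_i=e_\ell,Z_i=z}\{X_i-\bar X_\ell(z)\}\{X_i-\bar X_\ell(z)\}^T\big]^{-1}\sum_{\ell=1}^k\sum_{i:I_i=e_\ell,Z_i=z}\{X_i-\bar X_\ell(z)\}Y_i$. $S_t^2(z)$ is the sample variance of $Y_i$ over $\{i:I_i=e_t,Z_i=z\}$; $S_{t,A}^2(z)$ is the same with $Y_i$ replaced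 by $Y_i-X_i^T\widehat\beta_t(z)$; $S_{t,B}^2(z)$ is the same with $Y_i$ replaced by $Y_i-X_i^T\widehat\beta(z)$; $\widehat\Sigma(z)$ is the sample covariance matrix of $X_i$ over $\{i:Z_i=z\}$. *)

theory Defs
  imports "HOL-Probability.Probability"
begin

definition conv_in_prob :: "'a measure \<Rightarrow> (nat \<Rightarrow> 'a \<Rightarrow> real) \<Rightarrow> real \<Rightarrow> bool" where
  "conv_in_prob M Xn c \<longleftrightarrow>
     (\<forall>e>0. (\<lambda>n. measure M {\<omega> \<in> space M. \<bar>Xn n \<omega> - c\<bar> > e}) \<longlonglongrightarrow> 0)"

text \<open>Elementary conditional expectation given the discrete event Z = z (P(Z = z) > 0).\<close>
definition cexp :: "'a measure \<Rightarrow> ('a \<Rightarrow> 'z) \<Rightarrow> 'z \<Rightarrow> ('a \<Rightarrow> real) \<Rightarrow> real" where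
  "cexp M Z z f =
     (\<integral>\<omega>. indicator {\<omega> \<in> space M. Z \<omega> = z} \<omega> * f \<omega> \<partial>M) / measure M {\<omega> \<in> space M. Z \<omega> = z}"

definition ccov :: "'a measure \<Rightarrow> ('a \<Rightarrow> 'z) \<Rightarrow> 'z \<Rightarrow> ('a \<Rightarrow> real) \<Rightarrow> ('a \<Rightarrow> real) \<Rightarrow> real" where
  "ccov M Z z f g = cexp M Z z (\<lambda>\<omega>. (f \<omega> - cexp M Z z f) * (g \<omega> - cexp M Z z g))"

definition cvar :: "'a measure \<Rightarrow> ('a \<Rightarrow> 'z) \<Rightarrow> 'z \<Rightarrow> ('a \<Rightarrow> real) \<Rightarrow> real" where
  "cvar M Z z f = cexp M Z z (\<lambda>\<omega>. (f \<omega> - cexp M Z z f)\<^sup>2)"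

definition cvar_vec :: "'a measure \<Rightarrow> ('a \<Rightarrow> 'z) \<Rightarrow> 'z \<Rightarrow> ('a \<Rightarrow> real^'p) \<Rightarrow> real^'p^'p" where
  "cvar_vec M Z z X = (\<chi> a b. ccov M Z z (\<lambda>\<omega>. X \<omega> $ a) (\<lambda>\<omega>. X \<omega> $ b))"

definition ccov_vec :: "'a measure \<Rightarrow> ('a \<Rightarrow> 'z) \<Rightarrow> 'z \<Rightarrow> ('a \<Rightarrow> real^'p) \<Rightarrow> ('a \<Rightarrow> real) \<Rightarrow> real^'p" where
  "ccov_vec M Z z X f = (\<chi> a. ccov M Z z (\<lambda>\<omega>. X \<omega> $ a) f)"

definition pvar :: "'a measure \<Rightarrow> ('a \<Rightarrow> real) \<Rightarrow> real" where
  "pvar M f = (\<integral>\<omega>. (f \<omega> - (\<integral>\<omega>'. f \<omega>' \<partial>M))\<^sup>2 \<partial>M)"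

definition pos_def :: "real^'p^'p \<Rightarrow> bool" where
  "pos_def A \<longleftrightarrow> (\<forall>x. x \<noteq> 0 \<longrightarrow> x \<bullet> (A *v x) > 0)"

definition pvec :: "nat \<Rightarrow> (nat \<Rightarrow> nat \<Rightarrow> 'a \<Rightarrow> real) \<Rightarrow> (nat \<Rightarrow> 'a \<Rightarrow> 'w) \<Rightarrow> nat \<Rightarrow> 'a \<Rightarrow> (nat \<Rightarrow> real) \<times> 'w" where
  "pvec k Y W i \<omega> = (restrict (\<lambda>l. Y i l \<omega>) {..<k}, W i \<omega>)"

definition pspace :: "nat \<Rightarrow> 'w measure \<Rightarrow> ((nat \<Rightarrow> real) \<times> 'w) measure" where
  "pspace k Wsp = (\<Pi>\<^sub>M l\<in>{..<k}. (borel :: real measure)) \<Otimes>\<^sub>M Wsp"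

definition smean :: "nat set \<Rightarrow> (nat \<Rightarrow> real) \<Rightarrow> real" where
  "smean A f = (\<Sum>i\<in>A. f i) / real (card A)"

definition svar :: "nat set \<Rightarrow> (nat \<Rightarrow> real) \<Rightarrow> real" where
  "svar A f = (\<Sum>i\<in>A. (f i - smean A f)\<^sup>2) / (real (card A) - 1)"

definition smean_vec :: "nat set \<Rightarrow> (nat \<Rightarrow> real^'p) \<Rightarrow> real^'p" where
  "smean_vec A x = (1 / real (card A)) *\<^sub>R (\<Sum>i\<in>A. x i)"

definition outer :: "real^'p \<Rightarrow> real^'p \<Rightarrow> real^'p^'p" where
  "outer u v = (\<chi> a b. u $ a * v $ b)"

definition scp :: "nat set \<Rightarrow> (nat \<Rightarrow> real^'p) \<Rightarrow> real^'p^'p" where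
  "scp A x = (\<Sum>i\<in>A. outer (x i - smean_vec A x) (x i - smean_vec A x))"

definition scov :: "nat set \<Rightarrow> (nat \<Rightarrow> real^'p) \<Rightarrow> real^'p^'p" where
  "scov A x = (1 / (real (card A) - 1)) *\<^sub>R scp A x"

definition scross :: "nat set \<Rightarrow> (nat \<Rightarrow> real^'p) \<Rightarrow> (nat \<Rightarrow> real) \<Rightarrow> real^'p" where
  "scross A x y = (\<Sum>i\<in>A. y i *\<^sub>R (x i - smean_vec A x))"

text \<open>Patients are indexed 0..n-1, treatments 0..k-1. Iv i: treatment of patient i;
  Yo i: observed response; Zo i: stratum variable; Xo i: covariate vector.\<close>

definition cell :: "nat \<Rightarrow> (nat \<Rightarrow> nat) \<Rightarrow> (nat \<Rightarrow> 'z) \<Rightarrow> nat \<Rightarrow> 'z \<Rightarrow> nat set" where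
  "cell n Iv Zo l z = {i. i < n \<and> Iv i = l \<and> Zo i = z}"

definition stratum :: "nat \<Rightarrow> (nat \<Rightarrow> 'z) \<Rightarrow> 'z \<Rightarrow> nat set" where
  "stratum n Zo z = {i. i < n \<and> Zo i = z}"

definition wt :: "nat \<Rightarrow> (nat \<Rightarrow> 'z) \<Rightarrow> 'z \<Rightarrow> real" where
  "wt n Zo z = real (card (stratum n Zo z)) / real n"

definition Ybar :: "nat \<Rightarrow> (nat \<Rightarrow> nat) \<Rightarrow> (nat \<Rightarrow> 'z) \<Rightarrow> (nat \<Rightarrow> real) \<Rightarrow> nat \<Rightarrow> 'z \<Rightarrow> real" where
  "Ybar n Iv Zo Yo l z = smean (cell n Iv Zo l z) Yo"

definition theta_hat :: "'z set \<Rightarrow> nat \<Rightarrow> (nat \<Rightarrow> nat) \<Rightarrow> (nat \<Rightarrow> 'z) \<Rightarrow> (nat \<Rightarrow> real) \<Rightarrow> nat \<Rightarrow> nat \<Rightarrow> real" where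
  "theta_hat Zs n Iv Zo Yo t s = (\<Sum>z\<in>Zs. wt n Zo z * (Ybar n Iv Zo Yo t z - Ybar n Iv Zo Yo s z))"

definition beta_hat :: "nat \<Rightarrow> (nat \<Rightarrow> nat) \<Rightarrow> (nat \<Rightarrow> 'z) \<Rightarrow> (nat \<Rightarrow> real^'p) \<Rightarrow> (nat \<Rightarrow> real) \<Rightarrow> nat \<Rightarrow> 'z \<Rightarrow> real^'p" where
  "beta_hat n Iv Zo Xo Yo l z =
     matrix_inv (scp (cell n Iv Zo l z) Xo) *v scross (cell n Iv Zo l z) Xo Yo"

definition beta_pool :: "nat \<Rightarrow> nat \<Rightarrow> (nat \<Rightarrow> nat) \<Rightarrow> (nat \<Rightarrow> 'z) \<Rightarrow> (nat \<Rightarrow> real^'p) \<Rightarrow> (nat \<Rightarrow> real) \<Rightarrow> 'z \<Rightarrow> real^'p" where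
  "beta_pool k n Iv Zo Xo Yo z =
     matrix_inv (\<Sum>l<k. scp (cell n Iv Zo l z) Xo) *v (\<Sum>l<k. scross (cell n Iv Zo l z) Xo Yo)"

definition sigU_hat :: "(nat \<Rightarrow> real) \<Rightarrow> 'z set \<Rightarrow> nat \<Rightarrow> (nat \<Rightarrow> nat) \<Rightarrow> (nat \<Rightarrow> 'z) \<Rightarrow> (nat \<Rightarrow> real) \<Rightarrow> nat \<Rightarrow> nat \<Rightarrow> real" where
  "sigU_hat \<pi> Zs n Iv Zo Yo t s =
     (\<Sum>z\<in>Zs. wt n Zo z * (svar (cell n Iv Zo t z) Yo / \<pi> t + svar (cell n Iv Zo s z) Yo / \<pi> s))"

definition sigV_hat :: "'z set \<Rightarrow> nat \<Rightarrow> (nat \<Rightarrow> nat) \<Rightarrow> (nat \<Rightarrow> 'z) \<Rightarrow> (nat \<Rightarrow> real) \<Rightarrow> nat \<Rightarrow> nat \<Rightarrow> real" where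
  "sigV_hat Zs n Iv Zo Yo t s =
     (\<Sum>z\<in>Zs. wt n Zo z * (Ybar n Iv Zo Yo t z - Ybar n Iv Zo Yo s z)\<^sup>2) - (theta_hat Zs n Iv Zo Yo t s)\<^sup>2"

definition sigA_hat :: "(nat \<Rightarrow> real) \<Rightarrow> 'z set \<Rightarrow> nat \<Rightarrow> (nat \<Rightarrow> nat) \<Rightarrow> (nat \<Rightarrow> 'z) \<Rightarrow> (nat \<Rightarrow> real^'p) \<Rightarrow> (nat \<Rightarrow> real) \<Rightarrow> nat \<Rightarrow> nat \<Rightarrow> real" where
  "sigA_hat \<pi> Zs n Iv Zo Xo Yo t s =
     (\<Sum>z\<in>Zs. wt n Zo z *
        (svar (cell n Iv Zo t z) (\<lambda>i. Yo i - Xo i \<bullet> beta_hat n Iv Zo Xo Yo t z) / \<pi> t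
       + svar (cell n Iv Zo s z) (\<lambda>i. Yo i - Xo i \<bullet> beta_hat n Iv Zo Xo Yo s z) / \<pi> s
       + (beta_hat n Iv Zo Xo Yo t z - beta_hat n Iv Zo Xo Yo s z) \<bullet>
           (scov (stratum n Zo z) Xo *v (beta_hat n Iv Zo Xo Yo t z - beta_hat n Iv Zo Xo Yo s z))))"

definition sigB_hat :: "nat \<Rightarrow> (nat \<Rightarrow> real) \<Rightarrow> 'z set \<Rightarrow> nat \<Rightarrow> (nat \<Rightarrow> nat) \<Rightarrow> (nat \<Rightarrow> 'z) \<Rightarrow> (nat \<Rightarrow> real^'p) \<Rightarrow> (nat \<Rightarrow> real) \<Rightarrow> nat \<Rightarrow> nat \<Rightarrow> real" where
  "sigB_hat k \<pi> Zs n Iv Zo Xo Yo t s =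
     (\<Sum>z\<in>Zs. wt n Zo z *
        (svar (cell n Iv Zo t z) (\<lambda>i. Yo i - Xo i \<bullet> beta_pool k n Iv Zo Xo Yo z) / \<pi> t
       + svar (cell n Iv Zo s z) (\<lambda>i. Yo i - Xo i \<bullet> beta_pool k n Iv Zo Xo Yo z) / \<pi> s))"

definition beta_pop :: "'a measure \<Rightarrow> ('a \<Rightarrow> 'z) \<Rightarrow> ('a \<Rightarrow> real^'p) \<Rightarrow> ('a \<Rightarrow> real) \<Rightarrow> 'z \<Rightarrow> real^'p" where
  "beta_pop M Z X Yl z = matrix_inv (cvar_vec M Z z X) *v ccov_vec M Z z X Yl"

definition sigU :: "'a measure \<Rightarrow> ('a \<Rightarrow> 'z) \<Rightarrow> (nat \<Rightarrow> 'a \<Rightarrow> real) \<Rightarrow> (nat \<Rightarrow> real) \<Rightarrow> nat \<Rightarrow> nat \<Rightarrow> real" where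
  "sigU M Z Y \<pi> t s =
     (\<integral>\<omega>. cvar M Z (Z \<omega>) (Y t) / \<pi> t + cvar M Z (Z \<omega>) (Y s) / \<pi> s \<partial>M)"

definition sigV :: "'a measure \<Rightarrow> ('a \<Rightarrow> 'z) \<Rightarrow> (nat \<Rightarrow> 'a \<Rightarrow> real) \<Rightarrow> nat \<Rightarrow> nat \<Rightarrow> real" where
  "sigV M Z Y t s = pvar M (\<lambda>\<omega>. cexp M Z (Z \<omega>) (\<lambda>\<omega>'. Y t \<omega>' - Y s \<omega>'))"

definition sigA :: "'a measure \<Rightarrow> ('a \<Rightarrow> 'z) \<Rightarrow> ('a \<Rightarrow> real^'p) \<Rightarrow> (nat \<Rightarrow> 'a \<Rightarrow> real) \<Rightarrow> (nat \<Rightarrow> real) \<Rightarrow> nat \<Rightarrow> nat \<Rightarrow> real" where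
  "sigA M Z X Y \<pi> t s =
     (\<integral>\<omega>. cvar M Z (Z \<omega>) (\<lambda>\<omega>'. Y t \<omega>' - X \<omega>' \<bullet> beta_pop M Z X (Y t) (Z \<omega>)) / \<pi> t
        + cvar M Z (Z \<omega>) (\<lambda>\<omega>'. Y s \<omega>' - X \<omega>' \<bullet> beta_pop M Z X (Y s) (Z \<omega>)) / \<pi> s \<partial>M)
   + (\<integral>\<omega>. (beta_pop M Z X (Y t) (Z \<omega>) - beta_pop M Z X (Y s) (Z \<omega>)) \<bullet>
          (cvar_vec M Z (Z \<omega>) X *v (beta_pop M Z X (Y t) (Z \<omega>) - beta_pop M Z X (Y s) (Z \<omega>))) \<partial>M)"

definition beta_bar :: "'a measure \<Rightarrow> ('a \<Rightarrow> 'z) \<Rightarrow> ('a \<Rightarrow> real^'p) \<Rightarrow> (nat \<Rightarrow> 'a \<Rightarrow> real) \<Rightarrow> (nat \<Rightarrow> real) \<Rightarrow> nat \<Rightarrow> 'z \<Rightarrow> real^'p" where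
  "beta_bar M Z X Y \<pi> k z = (\<Sum>l<k. \<pi> l *\<^sub>R beta_pop M Z X (Y l) z)"

definition sigB :: "'a measure \<Rightarrow> ('a \<Rightarrow> 'z) \<Rightarrow> ('a \<Rightarrow> real^'p) \<Rightarrow> (nat \<Rightarrow> 'a \<Rightarrow> real) \<Rightarrow> (nat \<Rightarrow> real) \<Rightarrow> nat \<Rightarrow> nat \<Rightarrow> nat \<Rightarrow> real" where
  "sigB M Z X Y \<pi> k t s =
     (\<integral>\<omega>. cvar M Z (Z \<omega>) (\<lambda>\<omega>'. Y t \<omega>' - X \<omega>' \<bullet> beta_bar M Z X Y \<pi> k (Z \<omega>)) / \<pi> t
        + cvar M Z (Z \<omega>) (\<lambda>\<omega>'. Y s \<omega>' - X \<omega>' \<bullet> beta_bar M Z X Y \<pi> k (Z \<omega>)) / \<pi> s \<partial>M)"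

end

theory Submission
  imports Defs
begin

(* Within a stratum z, every estimator is a continuous function of n(z)/n and of the cell
   averages (1/n) * sum {F(D_i) | Z_i = z, I_i = l} with F among 1, Y, Y^2, X, Y X and X X^T,
   where D_i is the data of patient i and l an arm. Each such average converges in probability to
   pi_l P(Z = z) E(F | Z = z): write F as its stratum mean plus a centred part. Given the strata
   of all patients, (C1) and (C2) make the centred parts of different patients uncorrelated, so
   Chebyshev's inequality gives a weak law for bounded F and truncation extends it to integrable F;
   the stratum means contribute n_l(z)/n, which tends to pi_l P(Z = z) by (C3). The continuous
   mapping theorem then yields the four limits, positive definiteness of var(X | Z = z) making
   matrix inversion continuous at the limit. *)

section \<open>Convergence in outer probability\<close>

text \<open>The estimators are not shown to be measurable, so convergence in probability is phrased
  with outer probability: the exceptional sets must eventually be covered by measurable sets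
  of arbitrarily small measure. For measurable real sequences this is \<^const>\<open>conv_in_prob\<close>.\<close>

definition vanishing_sets :: "'a measure \<Rightarrow> (nat \<Rightarrow> 'a set) \<Rightarrow> bool" where
  "vanishing_sets M B \<longleftrightarrow>
     (\<forall>d>0. eventually (\<lambda>n. \<exists>A\<in>sets M. B n \<subseteq> A \<and> measure M A < d) sequentially)"

definition tendsto_prob :: "'a measure \<Rightarrow> (nat \<Rightarrow> 'a \<Rightarrow> 'b::metric_space) \<Rightarrow> 'b \<Rightarrow> bool" where
  "tendsto_prob M X c \<longleftrightarrow> (\<forall>e>0. vanishing_sets M (\<lambda>n. {\<omega>\<in>space M. e < dist (X n \<omega>) c}))"

lemma vanishing_setsI:
  "(\<And>d. d > 0 \<Longrightarrow> eventually (\<lambda>n. \<exists>A\<in>sets M. B n \<subseteq> A \<and> measure M A < d) sequentially)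
    \<Longrightarrow> vanishing_sets M B"
  unfolding vanishing_sets_def by blast

lemma vanishing_setsD:
  "vanishing_sets M B \<Longrightarrow> d > 0 \<Longrightarrow> eventually (\<lambda>n. \<exists>A\<in>sets M. B n \<subseteq> A \<and> measure M A < d) sequentially"
  unfolding vanishing_sets_def by blast

lemma vanishing_sets_mono:
  assumes "vanishing_sets M B" "\<And>n. B' n \<subseteq> B n"
  shows "vanishing_sets M B'"
proof (rule vanishing_setsI)
  fix d :: real assume "d > 0"
  with assms(1) have "eventually (\<lambda>n. \<exists>A\<in>sets M. B n \<subseteq> A \<and> measure M A < d) sequentially"
    by (rule vanishing_setsD)
  then show "eventually (\<lambda>n. \<exists>A\<in>sets M. B' n \<subseteq> A \<and> measure M A < d) sequentially"
    by eventually_elim (use assms(2) in blast)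
qed

lemma vanishing_sets_empty: "vanishing_sets M (\<lambda>n. {})"
  by (auto intro!: vanishing_setsI bexI[of _ "{}"])

lemma vanishing_sets_Un:
  assumes "finite_measure M" "vanishing_sets M B" "vanishing_sets M C"
  shows "vanishing_sets M (\<lambda>n. B n \<union> C n)"
proof (rule vanishing_setsI)
  fix d :: real assume "d > 0"
  then have "d/2 > 0" by simp
  from vanishing_setsD[OF assms(2) this] vanishing_setsD[OF assms(3) this]
  show "eventually (\<lambda>n. \<exists>A\<in>sets M. B n \<union> C n \<subseteq> A \<and> measure M A < d) sequentially"
  proof eventually_elim
    case (elim n)
    then obtain A1 A2 where A: "A1 \<in> sets M" "B n \<subseteq> A1" "measure M A1 < d/2"
      "A2 \<in> sets M" "C n \<subseteq> A2" "measure M A2 < d/2" by blast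
    have "measure M (A1 \<union> A2) \<le> measure M A1 + measure M A2"
      using A assms(1) by (intro measure_subadditive) (auto simp: finite_measure.emeasure_finite)
    then show ?case using A by (intro bexI[of _ "A1 \<union> A2"]) auto
  qed
qed

lemma vanishing_sets_UN:
  assumes "finite_measure M" "finite S" "\<And>s. s \<in> S \<Longrightarrow> vanishing_sets M (B s)"
  shows "vanishing_sets M (\<lambda>n. \<Union>s\<in>S. B s n)"
  using assms(2,3)
proof (induction S rule: finite_induct)
  case (insert s S)
  then have "vanishing_sets M (\<lambda>n. B s n \<union> (\<Union>s\<in>S. B s n))"
    by (intro vanishing_sets_Un assms(1)) auto
  then show ?case by simp
qed (simp add: vanishing_sets_empty)

lemma tendsto_probI:
  "(\<And>e. e > 0 \<Longrightarrow> vanishing_sets M (\<lambda>n. {\<omega>\<in>space M. e < dist (X n \<omega>) c})) \<Longrightarrow> tendsto_prob M X c"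
  unfolding tendsto_prob_def by auto

lemma tendsto_probD:
  "tendsto_prob M X c \<Longrightarrow> e > 0 \<Longrightarrow> vanishing_sets M (\<lambda>n. {\<omega>\<in>space M. e < dist (X n \<omega>) c})"
  unfolding tendsto_prob_def by auto

lemma tendsto_prob_cong:
  assumes "tendsto_prob M X a" "\<And>n \<omega>. \<omega> \<in> space M \<Longrightarrow> X' n \<omega> = X n \<omega>" "a = a'"
  shows "tendsto_prob M X' a'"
  using assms unfolding tendsto_prob_def by (simp cong: conj_cong)

lemma tendsto_prob_cong_eventually:
  assumes "tendsto_prob M X a" "\<And>n \<omega>. n \<ge> N \<Longrightarrow> \<omega> \<in> space M \<Longrightarrow> X' n \<omega> = X n \<omega>"
  shows "tendsto_prob M X' a"
proof (rule tendsto_probI, rule vanishing_setsI)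
  fix e d :: real assume "e > 0" "d > 0"
  have "eventually (\<lambda>n. \<exists>A\<in>sets M. {\<omega> \<in> space M. e < dist (X n \<omega>) a} \<subseteq> A \<and> measure M A < d) sequentially"
    by (rule vanishing_setsD[OF tendsto_probD[OF assms(1) \<open>e > 0\<close>] \<open>d > 0\<close>])
  moreover have "eventually (\<lambda>n. n \<ge> N) sequentially" by (rule eventually_ge_at_top)
  ultimately show "eventually (\<lambda>n. \<exists>A\<in>sets M. {\<omega> \<in> space M. e < dist (X' n \<omega>) a} \<subseteq> A \<and> measure M A < d) sequentially"
  proof eventually_elim
    case (elim n)
    then have "{\<omega> \<in> space M. e < dist (X' n \<omega>) a} = {\<omega> \<in> space M. e < dist (X n \<omega>) a}"
      using assms(2) by auto
    then show ?case using elim by simp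
  qed
qed

lemma tendsto_prob_const: "tendsto_prob M (\<lambda>n \<omega>. c) c"
  by (auto intro!: tendsto_probI simp: vanishing_sets_empty)

lemma tendsto_prob_deterministic:
  assumes "x \<longlonglongrightarrow> c"
  shows "tendsto_prob M (\<lambda>n \<omega>. x n) c"
proof (rule tendsto_probI, rule vanishing_setsI)
  fix e d :: real assume "e > 0" "d > 0"
  from tendstoD[OF assms \<open>e > 0\<close>]
  show "eventually (\<lambda>n. \<exists>A\<in>sets M. {\<omega>\<in>space M. e < dist (x n) c} \<subseteq> A \<and> measure M A < d) sequentially"
    by eventually_elim (use \<open>d > 0\<close> in \<open>auto intro!: bexI[of _ "{}"]\<close>)
qed

lemma tendsto_prob_imp_conv_in_prob:
  fixes X :: "nat \<Rightarrow> 'a \<Rightarrow> real"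
  assumes fm: "finite_measure M" and "tendsto_prob M X c"
  shows "conv_in_prob M X c"
  unfolding conv_in_prob_def
proof (intro allI impI)
  fix e :: real assume e: "e > 0"
  show "(\<lambda>n. measure M {\<omega> \<in> space M. e < \<bar>X n \<omega> - c\<bar>}) \<longlonglongrightarrow> 0"
  proof (rule tendstoI)
    fix d :: real assume d: "d > 0"
    have "eventually (\<lambda>n. \<exists>A\<in>sets M. {\<omega> \<in> space M. e < dist (X n \<omega>) c} \<subseteq> A \<and> measure M A < d) sequentially"
      using tendsto_probD[OF assms(2) e] d by (rule vanishing_setsD)
    then show "eventually (\<lambda>n. dist (measure M {\<omega> \<in> space M. e < \<bar>X n \<omega> - c\<bar>}) 0 < d) sequentially"
    proof eventually_elim
      case (elim n)
      then obtain A where A: "A \<in> sets M" "{\<omega> \<in> space M. e < \<bar>X n \<omega> - c\<bar>} \<subseteq> A" "measure M A < d"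
        by (auto simp: dist_real_def)
      show ?case
      proof (cases "{\<omega> \<in> space M. e < \<bar>X n \<omega> - c\<bar>} \<in> sets M")
        case True
        have "measure M {\<omega> \<in> space M. e < \<bar>X n \<omega> - c\<bar>} \<le> measure M A"
          using A True fm by (intro finite_measure.finite_measure_mono) auto
        then show ?thesis using A by simp
      next
        case False
        then show ?thesis using d by (simp add: measure_notin_sets)
      qed
    qed
  qed
qed

lemma conv_in_prob_imp_tendsto_prob:
  fixes X :: "nat \<Rightarrow> 'a \<Rightarrow> real"
  assumes "conv_in_prob M X c" and [measurable]: "\<And>n. X n \<in> borel_measurable M"
  shows "tendsto_prob M X c"
proof (rule tendsto_probI, rule vanishing_setsI)
  fix e d :: real assume "e > 0" "d > 0"
  have "(\<lambda>n. measure M {\<omega> \<in> space M. e < \<bar>X n \<omega> - c\<bar>}) \<longlonglongrightarrow> 0"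
    using assms(1) \<open>e > 0\<close> unfolding conv_in_prob_def by blast
  from tendstoD[OF this \<open>d > 0\<close>]
  show "eventually (\<lambda>n. \<exists>A\<in>sets M. {\<omega> \<in> space M. e < dist (X n \<omega>) c} \<subseteq> A \<and> measure M A < d) sequentially"
  proof eventually_elim
    case (elim n)
    have "{\<omega> \<in> space M. e < \<bar>X n \<omega> - c\<bar>} \<in> sets M" by measurable
    with elim show ?case by (intro bexI[of _ "{\<omega> \<in> space M. e < \<bar>X n \<omega> - c\<bar>}"]) (auto simp: dist_real_def)
  qed
qed

lemma tendsto_prob_Pair:
  assumes "finite_measure M" "tendsto_prob M X a" "tendsto_prob M Y b"
  shows "tendsto_prob M (\<lambda>n \<omega>. (X n \<omega>, Y n \<omega>)) (a, b)"
proof (rule tendsto_probI)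
  fix e :: real assume "e > 0"
  have "vanishing_sets M (\<lambda>n. {\<omega>\<in>space M. e/2 < dist (X n \<omega>) a} \<union> {\<omega>\<in>space M. e/2 < dist (Y n \<omega>) b})"
    using assms \<open>e > 0\<close> by (intro vanishing_sets_Un tendsto_probD) auto
  moreover have "{\<omega>\<in>space M. e < dist (X n \<omega>, Y n \<omega>) (a, b)} \<subseteq>
      {\<omega>\<in>space M. e/2 < dist (X n \<omega>) a} \<union> {\<omega>\<in>space M. e/2 < dist (Y n \<omega>) b}" for n
  proof safe
    fix \<omega> assume "e < dist (X n \<omega>, Y n \<omega>) (a, b)" "\<not> e / 2 < dist (Y n \<omega>) b"
    moreover have "dist (X n \<omega>, Y n \<omega>) (a, b) \<le> dist (X n \<omega>) a + dist (Y n \<omega>) b"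
      unfolding dist_Pair_Pair by (rule sqrt_sum_squares_le_sum) auto
    ultimately show "e / 2 < dist (X n \<omega>) a" by linarith
  qed
  ultimately show "vanishing_sets M (\<lambda>n. {\<omega>\<in>space M. e < dist (X n \<omega>, Y n \<omega>) (a, b)})"
    by (rule vanishing_sets_mono)
qed

lemma tendsto_prob_isCont:
  assumes "tendsto_prob M X a" "isCont g a"
  shows "tendsto_prob M (\<lambda>n \<omega>. g (X n \<omega>)) (g a)"
proof (rule tendsto_probI)
  fix e :: real assume "e > 0"
  then obtain r where r: "r > 0" "\<And>x. dist x a < r \<Longrightarrow> dist (g x) (g a) < e"
    using assms(2) unfolding continuous_at_eps_delta by blast
  have "vanishing_sets M (\<lambda>n. {\<omega>\<in>space M. r/2 < dist (X n \<omega>) a})"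
    using assms r by (intro tendsto_probD) auto
  moreover have "{\<omega>\<in>space M. e < dist (g (X n \<omega>)) (g a)} \<subseteq> {\<omega>\<in>space M. r/2 < dist (X n \<omega>) a}" for n
  proof (safe, rule ccontr)
    fix \<omega> assume "e < dist (g (X n \<omega>)) (g a)" "\<not> r/2 < dist (X n \<omega>) a"
    then have "dist (X n \<omega>) a < r" "e < dist (g (X n \<omega>)) (g a)" using r(1) by linarith+
    then show False using r(2) by fastforce
  qed
  ultimately show "vanishing_sets M (\<lambda>n. {\<omega>\<in>space M. e < dist (g (X n \<omega>)) (g a)})"
    by (rule vanishing_sets_mono)
qed

lemma tendsto_prob_binop:
  assumes "finite_measure M" "tendsto_prob M X a" "tendsto_prob M Y b"
    and "isCont (\<lambda>p. f (fst p) (snd p)) (a, b)"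
  shows "tendsto_prob M (\<lambda>n \<omega>. f (X n \<omega>) (Y n \<omega>)) (f a b)"
  using tendsto_prob_isCont[OF tendsto_prob_Pair[OF assms(1-3)] assms(4)] by simp

lemma tendsto_prob_cong_near:
  assumes "finite_measure M" "tendsto_prob M X a" "tendsto_prob M V v" "open U" "v \<in> U"
    and eq: "\<And>n \<omega>. \<omega> \<in> space M \<Longrightarrow> V n \<omega> \<in> U \<Longrightarrow> X' n \<omega> = X n \<omega>"
  shows "tendsto_prob M X' a"
proof (rule tendsto_probI)
  fix e :: real assume "e > 0"
  obtain r where r: "r > 0" "ball v r \<subseteq> U"
    using assms(4,5) open_contains_ball by blast
  have "vanishing_sets M (\<lambda>n. {\<omega>\<in>space M. e < dist (X n \<omega>) a} \<union> {\<omega>\<in>space M. r/2 < dist (V n \<omega>) v})"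
    using assms \<open>e > 0\<close> r by (intro vanishing_sets_Un tendsto_probD) auto
  moreover have "{\<omega>\<in>space M. e < dist (X' n \<omega>) a} \<subseteq>
     {\<omega>\<in>space M. e < dist (X n \<omega>) a} \<union> {\<omega>\<in>space M. r/2 < dist (V n \<omega>) v}" for n
  proof safe
    fix \<omega> assume "\<omega> \<in> space M" "e < dist (X' n \<omega>) a" "\<not> r / 2 < dist (V n \<omega>) v"
    then have "V n \<omega> \<in> U" using r by (auto simp: dist_commute)
    with eq \<open>\<omega> \<in> space M\<close> \<open>e < dist (X' n \<omega>) a\<close> show "e < dist (X n \<omega>) a" by auto
  qed
  ultimately show "vanishing_sets M (\<lambda>n. {\<omega>\<in>space M. e < dist (X' n \<omega>) a})"
    by (rule vanishing_sets_mono)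
qed

lemma tendsto_prob_vec:
  fixes X :: "nat \<Rightarrow> 'a \<Rightarrow> 'b::real_normed_vector^'n"
  assumes "finite_measure M" "\<And>i. tendsto_prob M (\<lambda>n \<omega>. X n \<omega> $ i) (c $ i)"
  shows "tendsto_prob M X c"
proof (rule tendsto_probI)
  fix e :: real assume "e > 0"
  define K where "K = real CARD('n)"
  have K: "K > 0" unfolding K_def by auto
  have "vanishing_sets M (\<lambda>n. \<Union>i\<in>UNIV. {\<omega>\<in>space M. e/K < dist (X n \<omega> $ i) (c $ i)})"
    using assms \<open>e > 0\<close> K by (intro vanishing_sets_UN tendsto_probD) auto
  moreover have "{\<omega>\<in>space M. e < dist (X n \<omega>) c} \<subseteq> (\<Union>i\<in>UNIV. {\<omega>\<in>space M. e/K < dist (X n \<omega> $ i) (c $ i)})" for n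
  proof (rule subsetI, rule ccontr)
    fix \<omega> assume \<omega>: "\<omega> \<in> {\<omega>\<in>space M. e < dist (X n \<omega>) c}"
      and "\<omega> \<notin> (\<Union>i\<in>UNIV. {\<omega>\<in>space M. e/K < dist (X n \<omega> $ i) (c $ i)})"
    then have le: "\<And>i. norm ((X n \<omega> - c) $ i) \<le> e/K" by (auto simp: dist_norm not_less)
    have "dist (X n \<omega>) c \<le> (\<Sum>i\<in>UNIV. norm ((X n \<omega> - c) $ i))"
      unfolding dist_norm norm_vec_def by (rule L2_set_le_sum) auto
    also have "\<dots> \<le> (\<Sum>i\<in>(UNIV::'n set). e/K)" by (rule sum_mono) (rule le)
    also have "\<dots> = e" using K unfolding K_def by simp
    finally show False using \<omega> by simp
  qed
  ultimately show "vanishing_sets M (\<lambda>n. {\<omega>\<in>space M. e < dist (X n \<omega>) c})"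
    by (rule vanishing_sets_mono)
qed

lemma tendsto_prob_add:
  fixes X :: "nat \<Rightarrow> 'a \<Rightarrow> 'b::real_normed_vector"
  assumes "finite_measure M" "tendsto_prob M X a" "tendsto_prob M Y b"
  shows "tendsto_prob M (\<lambda>n \<omega>. X n \<omega> + Y n \<omega>) (a + b)"
  by (rule tendsto_prob_binop[OF assms]) (intro continuous_intros)

lemma tendsto_prob_diff:
  fixes X :: "nat \<Rightarrow> 'a \<Rightarrow> 'b::real_normed_vector"
  assumes "finite_measure M" "tendsto_prob M X a" "tendsto_prob M Y b"
  shows "tendsto_prob M (\<lambda>n \<omega>. X n \<omega> - Y n \<omega>) (a - b)"
  by (rule tendsto_prob_binop[OF assms]) (intro continuous_intros)

lemma tendsto_prob_mult:
  fixes X :: "nat \<Rightarrow> 'a \<Rightarrow> real"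
  assumes "finite_measure M" "tendsto_prob M X a" "tendsto_prob M Y b"
  shows "tendsto_prob M (\<lambda>n \<omega>. X n \<omega> * Y n \<omega>) (a * b)"
  by (rule tendsto_prob_binop[OF assms]) (intro continuous_intros)

lemma tendsto_prob_scaleR:
  fixes Y :: "nat \<Rightarrow> 'a \<Rightarrow> 'b::real_normed_vector"
  assumes "finite_measure M" "tendsto_prob M X a" "tendsto_prob M Y b"
  shows "tendsto_prob M (\<lambda>n \<omega>. X n \<omega> *\<^sub>R Y n \<omega>) (a *\<^sub>R b)"
  by (rule tendsto_prob_binop[OF assms]) (intro continuous_intros)

lemma tendsto_prob_inner:
  fixes Y :: "nat \<Rightarrow> 'a \<Rightarrow> 'b::real_inner"
  assumes "finite_measure M" "tendsto_prob M X a" "tendsto_prob M Y b"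
  shows "tendsto_prob M (\<lambda>n \<omega>. X n \<omega> \<bullet> Y n \<omega>) (a \<bullet> b)"
  by (rule tendsto_prob_binop[OF assms]) (intro continuous_intros)

lemma tendsto_prob_divide:
  fixes X :: "nat \<Rightarrow> 'a \<Rightarrow> real"
  assumes "finite_measure M" "tendsto_prob M X a" "tendsto_prob M Y b" "b \<noteq> 0"
  shows "tendsto_prob M (\<lambda>n \<omega>. X n \<omega> / Y n \<omega>) (a / b)"
  by (rule tendsto_prob_binop[OF assms(1-3)]) (use assms(4) in \<open>intro continuous_intros; simp\<close>)

lemma tendsto_prob_power2:
  fixes X :: "nat \<Rightarrow> 'a \<Rightarrow> real"
  assumes "tendsto_prob M X a"
  shows "tendsto_prob M (\<lambda>n \<omega>. (X n \<omega>)\<^sup>2) (a\<^sup>2)"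
  by (rule tendsto_prob_isCont[OF assms]) (intro continuous_intros)

lemma tendsto_prob_sum:
  fixes X :: "'i \<Rightarrow> nat \<Rightarrow> 'a \<Rightarrow> 'b::real_normed_vector"
  assumes "finite_measure M" "finite S" "\<And>s. s \<in> S \<Longrightarrow> tendsto_prob M (X s) (a s)"
  shows "tendsto_prob M (\<lambda>n \<omega>. \<Sum>s\<in>S. X s n \<omega>) (\<Sum>s\<in>S. a s)"
  using assms(2,3)
  by (induction S rule: finite_induct) (simp_all add: tendsto_prob_const tendsto_prob_add[OF assms(1)])

lemma isCont_matrix_vector_mult: "isCont (\<lambda>p. fst p *v snd p) (x :: (real^'n^'m) \<times> (real^'n))"
  unfolding isCont_def matrix_vector_mult_def by (intro tendsto_intros tendsto_vec_lambda)

lemma isCont_outer: "isCont (\<lambda>p. outer (fst p) (snd p)) (x :: (real^'n) \<times> (real^'n))"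
  unfolding isCont_def outer_def by (intro tendsto_intros tendsto_vec_lambda)

lemma isCont_det: "isCont (det :: real^'n^'n \<Rightarrow> real) A"
  unfolding isCont_def det_def by (intro tendsto_intros)

lemma open_det_nonzero: "open {A :: real^'n^'n. det A \<noteq> 0}"
  by (rule open_Collect_neq) (auto intro!: continuous_at_imp_continuous_on isCont_det)

lemma matrix_inv_mult_eqI:
  fixes A :: "real^'n^'n"
  assumes "det A \<noteq> 0" "A *v x = b"
  shows "matrix_inv A *v b = x"
proof -
  have "\<exists>A'. A ** A' = mat 1 \<and> A' ** A = mat 1"
    using assms(1) invertible_det_nz unfolding invertible_def by blast
  then have inv: "matrix_inv A ** A = mat 1"
    unfolding matrix_inv_def by (rule someI2_ex) auto
  have "matrix_inv A *v b = (matrix_inv A ** A) *v x"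
    using assms(2) by (simp add: matrix_vector_mul_assoc[symmetric])
  then show ?thesis unfolding inv by simp
qed

lemma matrix_inv_mult_Cramer:
  fixes A :: "real^'n^'n"
  assumes "det A \<noteq> 0"
  shows "matrix_inv A *v b = (\<chi> k. det (\<chi> i j. if j = k then b $ i else A $ i $ j) / det A)"
  by (rule matrix_inv_mult_eqI[OF assms]) (simp add: cramer[OF assms])

lemma matrix_inv_mult_scaleR:
  fixes A :: "real^'n^'n"
  assumes "det A \<noteq> 0" "c \<noteq> 0"
  shows "matrix_inv (c *\<^sub>R A) *v (c *\<^sub>R b) = matrix_inv A *v b"
proof (rule matrix_inv_mult_eqI)
  show "det (c *\<^sub>R A) \<noteq> 0"
    using assms scalar_invertible[of c A] by (simp add: invertible_det_nz)
  have "A *v (matrix_inv A *v b) = b"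
    unfolding matrix_inv_mult_Cramer[OF assms(1)] by (simp add: cramer[OF assms(1)])
  then show "(c *\<^sub>R A) *v (matrix_inv A *v b) = c *\<^sub>R b"
    by (simp add: scaleR_matrix_vector_assoc[symmetric])
qed

text \<open>Cramer's rule exhibits \<open>A\<^sup>-\<^sup>1 b\<close> near an invertible \<open>A\<close> as a rational function of the entries.\<close>

lemma isCont_matrix_inv_mult:
  fixes A :: "real^'n^'n"
  assumes "det A \<noteq> 0"
  shows "isCont (\<lambda>p. matrix_inv (fst p) *v snd p) (A, b)"
proof -
  define cramer :: "(real^'n^'n) \<times> (real^'n) \<Rightarrow> real^'n" where
    "cramer p = (\<chi> k. det (\<chi> i j. if j = k then snd p $ i else fst p $ i $ j) / det (fst p))" for p
  have "isCont (\<lambda>p. det (fst p)) (A, b)"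
    by (rule continuous_at_compose[OF _ isCont_det, unfolded o_def]) (intro continuous_intros)
  then have "eventually (\<lambda>p. det (fst p) \<noteq> 0) (at (A, b))"
    using assms unfolding isCont_def by (intro tendsto_imp_eventually_ne) auto
  then have "eventually (\<lambda>p. det (fst p) \<noteq> 0) (nhds (A, b))"
    using assms by (simp add: eventually_nhds_conv_at)
  then have ev: "eventually (\<lambda>p. matrix_inv (fst p) *v snd p = cramer p) (nhds (A, b))"
    unfolding cramer_def by eventually_elim (rule matrix_inv_mult_Cramer)
  have proj: "(fst \<longlongrightarrow> A) (at (A, b))" "(snd \<longlongrightarrow> b) (at (A, b))"
    using tendsto_fst[OF tendsto_ident_at, of "(A,b)" UNIV] tendsto_snd[OF tendsto_ident_at, of "(A,b)" UNIV]
    by (simp_all add: eta_contract_eq)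
  have "isCont cramer (A, b)"
    unfolding isCont_def cramer_def det_def using assms unfolding det_def
    by (intro tendsto_intros tendsto_vec_lambda) (auto intro!: tendsto_vec_nth tendsto_intros proj)
  then show ?thesis using ev by (subst isCont_cong) auto
qed

lemma det_nonzero_if_pos_def:
  fixes A :: "real^'n^'n"
  assumes "pos_def A"
  shows "det A \<noteq> 0"
proof -
  have "inj ((*v) A)"
  proof (rule injI, rule ccontr)
    fix x y assume "A *v x = A *v y" "x \<noteq> y"
    then have "A *v (x - y) = 0" "x - y \<noteq> 0" by (simp_all add: matrix_vector_mult_diff_distrib)
    then have "0 < (x - y) \<bullet> (A *v (x - y))" using assms unfolding pos_def_def by blast
    with \<open>A *v (x - y) = 0\<close> show False by simp
  qed
  then have "det (matrix ((*v) A)) \<noteq> 0"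
    by (subst det_nz_iff_inj) (auto simp: matrix_vector_mul_linear)
  then show ?thesis by simp
qed

lemma outer_scaleR: "outer (c *\<^sub>R u) (c *\<^sub>R v) = (c * c) *\<^sub>R outer u v"
  unfolding outer_def by (simp add: vec_eq_iff)

lemma inner_sum_outer_mult:
  fixes x :: "nat \<Rightarrow> real^'p"
  shows "b \<bullet> ((\<Sum>i\<in>A. outer (x i) (x i)) *v b) = (\<Sum>i\<in>A. (x i \<bullet> b)\<^sup>2)"
proof -
  have "(\<Sum>i\<in>A. outer (x i) (x i)) *v b = (\<Sum>i\<in>A. outer (x i) (x i) *v b)"
    by (simp add: matrix_vector_mult_def vec_eq_iff sum_component sum_distrib_right)
       (subst sum.swap, simp)
  moreover have "b \<bullet> (outer y y *v b) = (y \<bullet> b)\<^sup>2" for y :: "real^'p"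
    unfolding outer_def matrix_vector_mult_def inner_vec_def power2_eq_square
    by (simp add: sum_distrib_left sum_distrib_right mult_ac)
  ultimately show ?thesis by (simp only: inner_sum_right)
qed

lemma tendsto_prob_matrix_vector_mult:
  fixes X :: "nat \<Rightarrow> 'a \<Rightarrow> real^'n^'m"
  assumes "finite_measure M" "tendsto_prob M X a" "tendsto_prob M Y b"
  shows "tendsto_prob M (\<lambda>n \<omega>. X n \<omega> *v Y n \<omega>) (a *v b)"
  by (rule tendsto_prob_binop[OF assms]) (rule isCont_matrix_vector_mult)

lemma tendsto_prob_outer:
  fixes X :: "nat \<Rightarrow> 'a \<Rightarrow> real^'n"
  assumes "finite_measure M" "tendsto_prob M X a" "tendsto_prob M Y b"
  shows "tendsto_prob M (\<lambda>n \<omega>. outer (X n \<omega>) (Y n \<omega>)) (outer a b)"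
  by (rule tendsto_prob_binop[OF assms]) (rule isCont_outer)

lemma tendsto_prob_matrix_inv_mult:
  fixes X :: "nat \<Rightarrow> 'a \<Rightarrow> real^'n^'n"
  assumes "finite_measure M" "tendsto_prob M X a" "tendsto_prob M Y b" "det a \<noteq> 0"
  shows "tendsto_prob M (\<lambda>n \<omega>. matrix_inv (X n \<omega>) *v Y n \<omega>) (matrix_inv a *v b)"
  by (rule tendsto_prob_binop[OF assms(1-3)]) (rule isCont_matrix_inv_mult[OF assms(4)])

lemma tendsto_prob_matrix_inv_mult_scaled:
  fixes A :: "nat \<Rightarrow> 'a \<Rightarrow> real^'n^'n"
  assumes fm: "finite_measure M" and A: "tendsto_prob M A a" and B: "tendsto_prob M B b" and "det a \<noteq> 0"
  shows "tendsto_prob M (\<lambda>n \<omega>. matrix_inv (real n *\<^sub>R A n \<omega>) *v (real n *\<^sub>R B n \<omega>)) (matrix_inv a *v b)"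
proof -
  have "tendsto_prob M (\<lambda>n \<omega>. matrix_inv (real (max n 1) *\<^sub>R A n \<omega>) *v (real (max n 1) *\<^sub>R B n \<omega>))
          (matrix_inv a *v b)"
  proof (rule tendsto_prob_cong_near[OF fm tendsto_prob_matrix_inv_mult[OF fm A B assms(4)] A open_det_nonzero])
    show "a \<in> {A. det A \<noteq> 0}" using assms(4) by simp
  qed (intro matrix_inv_mult_scaleR, auto)
  then show ?thesis
    by (rule tendsto_prob_cong_eventually[where N=1]) (simp add: max_def)
qed

lemma sum_centered_mult:
  fixes f g :: "nat \<Rightarrow> real"
  assumes "finite A"
  shows "(\<Sum>i\<in>A. (f i - (\<Sum>j\<in>A. f j) / real (card A)) * (g i - (\<Sum>j\<in>A. g j) / real (card A)))
       = (\<Sum>i\<in>A. f i * g i) - (\<Sum>i\<in>A. f i) * (\<Sum>i\<in>A. g i) / real (card A)"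
proof -
  have shift: "(\<Sum>i\<in>A. (f i - a) * (g i - b))
      = (\<Sum>i\<in>A. f i * g i) - b * (\<Sum>i\<in>A. f i) - a * (\<Sum>i\<in>A. g i) + real (card A) * a * b" for a b
    using assms by (induction A rule: finite_induct) (auto simp: algebra_simps)
  show ?thesis
  proof (cases "A = {}")
    case False
    then have "real (card A) > 0" using assms by (simp add: card_gt_0_iff)
    then show ?thesis unfolding shift by (simp add: field_simps)
  qed simp
qed

lemma svar_eq_sums:
  assumes "finite A"
  shows "svar A f = ((\<Sum>i\<in>A. (f i)\<^sup>2) - (\<Sum>i\<in>A. f i)\<^sup>2 / real (card A)) / (real (card A) - 1)"
  unfolding svar_def smean_def power2_eq_square using sum_centered_mult[OF assms, of f f] by simp

lemma scp_eq_sums: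
  fixes x :: "nat \<Rightarrow> real^'p"
  assumes "finite A"
  shows "scp A x = (\<Sum>i\<in>A. outer (x i) (x i)) - (1 / real (card A)) *\<^sub>R outer (\<Sum>i\<in>A. x i) (\<Sum>i\<in>A. x i)"
proof -
  have "smean_vec A x $ a = (\<Sum>i\<in>A. x i $ a) / real (card A)" for a
    unfolding smean_vec_def by (simp add: sum_component)
  then show ?thesis
    unfolding scp_def outer_def
    by (simp add: vec_eq_iff sum_component sum_centered_mult[OF assms])
qed

lemma scross_eq_sums:
  fixes x :: "nat \<Rightarrow> real^'p"
  shows "scross A x y = (\<Sum>i\<in>A. y i *\<^sub>R x i) - ((\<Sum>i\<in>A. y i) / real (card A)) *\<^sub>R (\<Sum>i\<in>A. x i)"
  unfolding scross_def smean_vec_def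
  by (simp add: scaleR_diff_right sum_subtractf scaleR_sum_left[symmetric] sum_divide_distrib)

lemma sum_residual_sums:
  fixes x :: "nat \<Rightarrow> real^'p"
  shows "(\<Sum>i\<in>A. y i - x i \<bullet> b) = (\<Sum>i\<in>A. y i) - b \<bullet> (\<Sum>i\<in>A. x i)"
    and "(\<Sum>i\<in>A. (y i - x i \<bullet> b)\<^sup>2)
       = (\<Sum>i\<in>A. (y i)\<^sup>2) - 2 * (b \<bullet> (\<Sum>i\<in>A. y i *\<^sub>R x i)) + b \<bullet> ((\<Sum>i\<in>A. outer (x i) (x i)) *v b)"
proof -
  show "(\<Sum>i\<in>A. y i - x i \<bullet> b) = (\<Sum>i\<in>A. y i) - b \<bullet> (\<Sum>i\<in>A. x i)"
    by (simp add: sum_subtractf inner_sum_right inner_commute)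
  have "(\<Sum>i\<in>A. (y i - x i \<bullet> b)\<^sup>2) = (\<Sum>i\<in>A. (y i)\<^sup>2 - 2 * (y i * (x i \<bullet> b)) + (x i \<bullet> b)\<^sup>2)"
    by (intro sum.cong) (auto simp: power2_eq_square algebra_simps)
  also have "\<dots> = (\<Sum>i\<in>A. (y i)\<^sup>2) - 2 * (b \<bullet> (\<Sum>i\<in>A. y i *\<^sub>R x i)) + (\<Sum>i\<in>A. (x i \<bullet> b)\<^sup>2)"
    by (simp add: sum.distrib sum_subtractf sum_distrib_left inner_sum_right inner_commute)
  finally show "(\<Sum>i\<in>A. (y i - x i \<bullet> b)\<^sup>2)
      = (\<Sum>i\<in>A. (y i)\<^sup>2) - 2 * (b \<bullet> (\<Sum>i\<in>A. y i *\<^sub>R x i)) + b \<bullet> ((\<Sum>i\<in>A. outer (x i) (x i)) *v b)"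
    by (simp add: inner_sum_outer_mult)
qed

text \<open>The sample variance written through the normalised sums \<open>m/n\<close>, \<open>S\<^sub>1/n\<close>, \<open>S\<^sub>2/n\<close> of a
  cell of size \<open>m\<close> out of \<open>n\<close>; the second argument \<open>1/n\<close> accounts for the divisor \<open>m - 1\<close>.\<close>

definition svar_of_sums :: "real \<Rightarrow> real \<Rightarrow> real \<Rightarrow> real \<Rightarrow> real" where
  "svar_of_sums N ninv s1 s2 = (s2 - s1\<^sup>2 / N) / (N - ninv)"

lemma svar_eq_svar_of_sums:
  assumes "finite A" "n > 0"
  shows "svar A f = svar_of_sums (real (card A) / real n) (1 / real n)
                      ((\<Sum>i\<in>A. f i) / real n) ((\<Sum>i\<in>A. (f i)\<^sup>2) / real n)"
proof (cases "A = {}")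
  case False
  define m where "m = real (card A)"
  define S1 where "S1 = (\<Sum>i\<in>A. f i)"
  define S2 where "S2 = (\<Sum>i\<in>A. (f i)\<^sup>2)"
  have "m > 0" "real n > 0" using False assms unfolding m_def by (auto simp: card_gt_0_iff)
  then have "S2 / real n - (S1 / real n)\<^sup>2 / (m / real n) = (S2 - S1\<^sup>2 / m) / real n"
    by (simp add: field_simps power2_eq_square)
  moreover have "m / real n - 1 / real n = (m - 1) / real n"
    by (simp add: diff_divide_distrib)
  ultimately show ?thesis
    using \<open>real n > 0\<close> unfolding svar_eq_sums[OF assms(1)] svar_of_sums_def
      m_def[symmetric] S1_def[symmetric] S2_def[symmetric] by simp
qed (simp add: svar_def svar_of_sums_def)

lemma tendsto_prob_svar_of_sums:
  assumes "finite_measure M" "tendsto_prob M N q" "tendsto_prob M ninv 0"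
    and "tendsto_prob M s1 (q * a)" "tendsto_prob M s2 (q * b)" "q \<noteq> 0"
  shows "tendsto_prob M (\<lambda>n \<omega>. svar_of_sums (N n \<omega>) (ninv n \<omega>) (s1 n \<omega>) (s2 n \<omega>)) (b - a\<^sup>2)"
proof -
  have "tendsto_prob M (\<lambda>n \<omega>. (s2 n \<omega> - (s1 n \<omega>)\<^sup>2 / N n \<omega>) / (N n \<omega> - ninv n \<omega>))
      ((q * b - (q * a)\<^sup>2 / q) / (q - 0))"
    using assms by (intro tendsto_prob_divide tendsto_prob_diff tendsto_prob_power2) auto
  moreover have "(q * b - (q * a)\<^sup>2 / q) / (q - 0) = b - a\<^sup>2"
    using assms(6) by (simp add: power2_eq_square field_simps)
  ultimately show ?thesis unfolding svar_of_sums_def by simp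
qed

definition centred_cp :: "real \<Rightarrow> real^'p \<Rightarrow> real^'p^'p \<Rightarrow> real^'p^'p" where
  "centred_cp N sx sxx = sxx - (1 / N) *\<^sub>R outer sx sx"

definition centred_cross :: "real \<Rightarrow> real \<Rightarrow> real^'p \<Rightarrow> real^'p \<Rightarrow> real^'p" where
  "centred_cross N sy sx sxy = sxy - (sy / N) *\<^sub>R sx"

section \<open>Laws of large numbers for triangular arrays\<close>

lemma integral_square_sum_orthogonal:
  fixes \<phi> :: "nat \<Rightarrow> 'a \<Rightarrow> real"
  assumes "prob_space M"
    and [measurable]: "\<And>i. \<phi> i \<in> borel_measurable M"
    and bd: "\<And>i \<omega>. \<bar>\<phi> i \<omega>\<bar> \<le> c"
    and orth: "\<And>i j. i < n \<Longrightarrow> j < n \<Longrightarrow> i \<noteq> j \<Longrightarrow> (\<integral>\<omega>. \<phi> i \<omega> * \<phi> j \<omega> \<partial>M) = 0"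
  shows "(\<integral>\<omega>. (\<Sum>i<n. \<phi> i \<omega>)\<^sup>2 \<partial>M) \<le> real n * c\<^sup>2"
proof -
  interpret prob_space M by fact
  have c: "c \<ge> 0" using bd[of 0 undefined] by simp
  have prod_bd: "\<bar>\<phi> i \<omega> * \<phi> j \<omega>\<bar> \<le> c\<^sup>2" for i j \<omega>
    unfolding abs_mult power2_eq_square by (intro mult_mono bd) (auto simp: c)
  have int: "integrable M (\<lambda>\<omega>. \<phi> i \<omega> * \<phi> j \<omega>)" for i j
    by (rule integrable_const_bound[where B="c\<^sup>2"]) (auto simp: prod_bd)
  have "(\<integral>\<omega>. (\<Sum>i<n. \<phi> i \<omega>)\<^sup>2 \<partial>M) = (\<Sum>i<n. \<Sum>j<n. (\<integral>\<omega>. \<phi> i \<omega> * \<phi> j \<omega> \<partial>M))"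
    unfolding power2_eq_square sum_product by (simp add: int integrable_sum)
  also have "\<dots> = (\<Sum>i<n. (\<integral>\<omega>. \<phi> i \<omega> * \<phi> i \<omega> \<partial>M))"
  proof (rule sum.cong[OF refl])
    fix i assume "i \<in> {..<n}"
    then show "(\<Sum>j<n. (\<integral>\<omega>. \<phi> i \<omega> * \<phi> j \<omega> \<partial>M)) = (\<integral>\<omega>. \<phi> i \<omega> * \<phi> i \<omega> \<partial>M)"
      using orth by (subst sum.remove[of _ i]) (auto intro!: sum.neutral)
  qed
  also have "\<dots> \<le> (\<Sum>i<n. c\<^sup>2)"
  proof (rule sum_mono)
    fix i
    have "(\<integral>\<omega>. \<phi> i \<omega> * \<phi> i \<omega> \<partial>M) \<le> (\<integral>\<omega>. c\<^sup>2 \<partial>M)"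
      using int prod_bd by (intro integral_mono) (auto simp: abs_le_iff)
    then show "(\<integral>\<omega>. \<phi> i \<omega> * \<phi> i \<omega> \<partial>M) \<le> c\<^sup>2" by (simp add: prob_space)
  qed
  finally show ?thesis by simp
qed

lemma measure_orthogonal_mean_ge_le:
  fixes \<phi> :: "nat \<Rightarrow> 'a \<Rightarrow> real"
  assumes P: "prob_space M"
    and [measurable]: "\<And>i. \<phi> i \<in> borel_measurable M"
    and bd: "\<And>i \<omega>. \<bar>\<phi> i \<omega>\<bar> \<le> c"
    and orth: "\<And>i j. i < n \<Longrightarrow> j < n \<Longrightarrow> i \<noteq> j \<Longrightarrow> (\<integral>\<omega>. \<phi> i \<omega> * \<phi> j \<omega> \<partial>M) = 0"
    and "n \<ge> 1" "e > 0"
  shows "measure M {\<omega> \<in> space M. e\<^sup>2 \<le> ((\<Sum>i<n. \<phi> i \<omega>) / real n)\<^sup>2} \<le> c\<^sup>2 / (real n * e\<^sup>2)"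
proof -
  interpret prob_space M by (rule P)
  have "c \<ge> 0" using bd[of 0 undefined] by simp
  then have "integrable M (\<lambda>\<omega>. \<phi> i \<omega> * \<phi> j \<omega>)" for i j
    by (intro integrable_const_bound[where B="c * c"]) (auto simp: abs_mult intro!: mult_mono bd)
  then have int: "integrable M (\<lambda>\<omega>. ((\<Sum>i<n. \<phi> i \<omega>) / real n)\<^sup>2)"
    unfolding power2_eq_square by (simp add: sum_product sum_divide_distrib)
  have "measure M {\<omega> \<in> space M. e\<^sup>2 \<le> ((\<Sum>i<n. \<phi> i \<omega>) / real n)\<^sup>2}
      \<le> (\<integral>\<omega>. ((\<Sum>i<n. \<phi> i \<omega>) / real n)\<^sup>2 \<partial>M) / e\<^sup>2"
    using \<open>e > 0\<close> by (intro integral_Markov_inequality_measure[OF int]) auto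
  also have "\<dots> = (\<integral>\<omega>. (\<Sum>i<n. \<phi> i \<omega>)\<^sup>2 \<partial>M) / (real n)\<^sup>2 / e\<^sup>2"
    by (simp add: power_divide)
  also have "\<dots> \<le> real n * c\<^sup>2 / (real n)\<^sup>2 / e\<^sup>2"
    by (intro divide_right_mono integral_square_sum_orthogonal[OF P]) (auto intro: bd orth)
  also have "\<dots> = c\<^sup>2 / (real n * e\<^sup>2)"
    using \<open>n \<ge> 1\<close> by (simp add: power2_eq_square)
  finally show ?thesis .
qed

lemma tendsto_prob_orthogonal_mean:
  fixes \<phi> :: "nat \<Rightarrow> nat \<Rightarrow> 'a \<Rightarrow> real"
  assumes P: "prob_space M"
    and meas[measurable]: "\<And>n i. \<phi> n i \<in> borel_measurable M"
    and bd: "\<And>n i \<omega>. \<bar>\<phi> n i \<omega>\<bar> \<le> c"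
    and orth: "\<And>n i j. i < n \<Longrightarrow> j < n \<Longrightarrow> i \<noteq> j \<Longrightarrow> (\<integral>\<omega>. \<phi> n i \<omega> * \<phi> n j \<omega> \<partial>M) = 0"
  shows "tendsto_prob M (\<lambda>n \<omega>. (\<Sum>i<n. \<phi> n i \<omega>) / real n) 0"
proof (rule tendsto_probI, rule vanishing_setsI)
  fix e d :: real assume e: "e > 0" and d: "d > 0"
  obtain N :: nat where N: "N > c\<^sup>2 / (d * e\<^sup>2)" using reals_Archimedean2 by blast
  have "eventually (\<lambda>n. n \<ge> max N 1) sequentially" by (rule eventually_ge_at_top)
  then show "eventually (\<lambda>n. \<exists>A\<in>sets M. {\<omega> \<in> space M. e < dist ((\<Sum>i<n. \<phi> n i \<omega>) / real n) 0} \<subseteq> A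
                \<and> measure M A < d) sequentially"
  proof eventually_elim
    case (elim n)
    then have n: "real n > c\<^sup>2 / (d * e\<^sup>2)" "n \<ge> 1" using N by auto
    define A where "A = {\<omega> \<in> space M. e\<^sup>2 \<le> ((\<Sum>i<n. \<phi> n i \<omega>) / real n)\<^sup>2}"
    have "A \<in> sets M" unfolding A_def by measurable
    moreover have "{\<omega> \<in> space M. e < dist ((\<Sum>i<n. \<phi> n i \<omega>) / real n) 0} \<subseteq> A"
    proof safe
      fix \<omega> assume "\<omega> \<in> space M" "e < dist ((\<Sum>i<n. \<phi> n i \<omega>) / real n) 0"
      then have "e\<^sup>2 \<le> \<bar>(\<Sum>i<n. \<phi> n i \<omega>) / real n\<bar>\<^sup>2"
        using e by (intro power_mono) (auto simp: dist_real_def)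
      then show "\<omega> \<in> A" using \<open>\<omega> \<in> space M\<close> unfolding A_def power2_abs by blast
    qed
    moreover have "measure M A \<le> c\<^sup>2 / (real n * e\<^sup>2)"
      unfolding A_def by (rule measure_orthogonal_mean_ge_le[where \<phi>="\<phi> n", OF P meas bd orth n(2) e])
    moreover have "c\<^sup>2 / (real n * e\<^sup>2) < d"
      using n(1) d e by (simp add: divide_less_eq mult_ac not_less)
    ultimately show ?case by (intro bexI[of _ A]) auto
  qed
qed

lemma tendsto_prob_approx:
  fixes X :: "nat \<Rightarrow> 'a \<Rightarrow> 'b::metric_space"
  assumes fm: "finite_measure M"
    and approx: "\<And>m. tendsto_prob M (Xm m) (a m)" and a: "a \<longlonglongrightarrow> c"
    and [measurable]: "\<And>m n. R m n \<in> borel_measurable M" and R_int: "\<And>m n. integrable M (R m n)"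
    and close: "\<And>m n \<omega>. \<omega> \<in> space M \<Longrightarrow> dist (X n \<omega>) (Xm m n \<omega>) \<le> R m n \<omega>"
    and R_mean: "\<And>m n. n \<ge> 1 \<Longrightarrow> (\<integral>\<omega>. R m n \<omega> \<partial>M) \<le> r m" and r: "r \<longlonglongrightarrow> 0"
  shows "tendsto_prob M X c"
proof (rule tendsto_probI, rule vanishing_setsI)
  fix e d :: real assume e: "e > 0" and d: "d > 0"
  have "eventually (\<lambda>m. dist (a m) c < e/4 \<and> dist (r m) 0 < e * d / 8) sequentially"
    using e d by (intro eventually_conj tendstoD[OF a] tendstoD[OF r]) auto
  then obtain m where m: "dist (a m) c < e/4" "r m < e * d / 8"
    by (auto simp: eventually_sequentially dist_real_def)
  have "eventually (\<lambda>n. \<exists>A\<in>sets M. {\<omega> \<in> space M. e/2 < dist (Xm m n \<omega>) (a m)} \<subseteq> A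
           \<and> measure M A < d/2) sequentially"
    using e d by (intro vanishing_setsD tendsto_probD[OF approx]) auto
  moreover have "eventually (\<lambda>n::nat. n \<ge> 1) sequentially" by (rule eventually_ge_at_top)
  ultimately show "eventually (\<lambda>n. \<exists>A\<in>sets M. {\<omega> \<in> space M. e < dist (X n \<omega>) c} \<subseteq> A
                     \<and> measure M A < d) sequentially"
  proof eventually_elim
    case (elim n)
    then obtain A1 where A1: "A1 \<in> sets M" "measure M A1 < d/2"
      "{\<omega> \<in> space M. e/2 < dist (Xm m n \<omega>) (a m)} \<subseteq> A1" by blast
    define A2 where "A2 = {\<omega> \<in> space M. e/4 \<le> R m n \<omega>}"
    have A2[measurable]: "A2 \<in> sets M" unfolding A2_def by measurable
    have "AE \<omega> in M. 0 \<le> R m n \<omega>"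
      by (intro AE_I2 order_trans[OF zero_le_dist close])
    then have "measure M A2 \<le> (\<integral>\<omega>. R m n \<omega> \<partial>M) / (e/4)"
      unfolding A2_def using e by (intro integral_Markov_inequality_measure[OF R_int]) auto
    also have "\<dots> < d/2"
      using R_mean[OF \<open>n \<ge> 1\<close>, of m] m e by (simp add: field_simps)
    finally have "measure M A2 < d/2" .
    moreover have "{\<omega> \<in> space M. e < dist (X n \<omega>) c} \<subseteq> A1 \<union> A2"
    proof safe
      fix \<omega> assume "\<omega> \<in> space M" "e < dist (X n \<omega>) c" "\<omega> \<notin> A2"
      moreover have "dist (X n \<omega>) c \<le> dist (X n \<omega>) (Xm m n \<omega>) + dist (Xm m n \<omega>) (a m) + dist (a m) c"
        using dist_triangle[of "X n \<omega>" c "Xm m n \<omega>"] dist_triangle[of "Xm m n \<omega>" c "a m"] by linarith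
      moreover have "dist (X n \<omega>) (Xm m n \<omega>) \<le> R m n \<omega>" by (rule close) fact
      ultimately have "e/2 < dist (Xm m n \<omega>) (a m)"
        using m unfolding A2_def by auto
      then show "\<omega> \<in> A1" using A1 \<open>\<omega> \<in> space M\<close> by blast
    qed
    moreover have "measure M (A1 \<union> A2) \<le> measure M A1 + measure M A2"
      using A1 A2 fm by (intro measure_subadditive) (auto simp: finite_measure.emeasure_finite)
    ultimately show ?case using A1 A2 by (intro bexI[of _ "A1 \<union> A2"]) auto
  qed
qed

definition clip :: "real \<Rightarrow> real \<Rightarrow> real" where
  "clip m x = max (- m) (min m x)"

lemma abs_clip_le: "m \<ge> 0 \<Longrightarrow> \<bar>clip m x\<bar> \<le> m"
  unfolding clip_def by auto

lemma abs_clip_le_abs: "m \<ge> 0 \<Longrightarrow> \<bar>clip m x\<bar> \<le> \<bar>x\<bar>"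
  unfolding clip_def by auto

lemma abs_diff_clip_le: "m \<ge> 0 \<Longrightarrow> \<bar>x - clip m x\<bar> \<le> \<bar>x\<bar>"
  unfolding clip_def by auto

lemma clip_tendsto: "(\<lambda>m::nat. clip (real m) x) \<longlonglongrightarrow> x"
proof (rule tendsto_eventually)
  obtain N :: nat where "real N \<ge> \<bar>x\<bar>" using real_arch_simple by blast
  then show "eventually (\<lambda>m::nat. clip (real m) x = x) sequentially"
    unfolding eventually_sequentially clip_def by (intro exI[of _ N]) (auto simp: max_def min_def)
qed

lemma borel_measurable_clip[measurable]:
  "f \<in> borel_measurable N \<Longrightarrow> (\<lambda>x. clip m (f x)) \<in> borel_measurable N"
  unfolding clip_def
  by (intro borel_measurable_max borel_measurable_min measurable_const borel_measurable_uminus) auto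

lemma integral_clip_tendsto:
  fixes f :: "'a \<Rightarrow> real"
  assumes [measurable]: "f \<in> borel_measurable M" and "integrable M f"
  shows "(\<lambda>m::nat. \<integral>x. clip (real m) (f x) \<partial>M) \<longlonglongrightarrow> (\<integral>x. f x \<partial>M)"
  by (rule integral_dominated_convergence[where w="\<lambda>x. \<bar>f x\<bar>"])
     (use assms in \<open>auto intro!: AE_I2 clip_tendsto simp: abs_clip_le_abs\<close>)

lemma integral_abs_diff_clip_tendsto:
  fixes f :: "'a \<Rightarrow> real"
  assumes [measurable]: "f \<in> borel_measurable M" and "integrable M f"
  shows "(\<lambda>m::nat. \<integral>x. \<bar>f x - clip (real m) (f x)\<bar> \<partial>M) \<longlonglongrightarrow> 0"
proof -
  have "(\<lambda>m::nat. \<integral>x. \<bar>f x - clip (real m) (f x)\<bar> \<partial>M) \<longlonglongrightarrow> (\<integral>x. 0 \<partial>M)"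
  proof (rule integral_dominated_convergence[where w="\<lambda>x. \<bar>f x\<bar>"])
    have "(\<lambda>m. y - clip (real m) y) \<longlonglongrightarrow> 0" for y
      using tendsto_diff[OF tendsto_const[of y] clip_tendsto[of y]] by simp
    then show "AE x in M. (\<lambda>m. \<bar>f x - clip (real m) (f x)\<bar>) \<longlonglongrightarrow> 0"
      by (intro AE_I2 tendsto_rabs_zero)
    show "AE x in M. norm \<bar>f x - clip (real m) (f x)\<bar> \<le> \<bar>f x\<bar>" for m :: nat
      by (intro AE_I2) (simp add: abs_diff_clip_le)
  qed (use assms in auto)
  then show ?thesis by simp
qed

lemma abs_integral_indicator_le:
  fixes f :: "'a \<Rightarrow> real"
  assumes "finite_measure M" and [measurable]: "S \<in> sets M" "f \<in> borel_measurable M"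
    and bd: "\<And>\<omega>. \<bar>f \<omega>\<bar> \<le> c"
  shows "\<bar>\<integral>\<omega>. indicator S \<omega> * f \<omega> \<partial>M\<bar> \<le> c * measure M S"
proof -
  interpret finite_measure M by fact
  have "c \<ge> 0" using bd[of undefined] by simp
  have "\<bar>\<integral>\<omega>. indicator S \<omega> * f \<omega> \<partial>M\<bar> \<le> (\<integral>\<omega>. \<bar>indicator S \<omega> * f \<omega>\<bar> \<partial>M)"
    by (rule integral_abs_bound)
  also have "\<dots> \<le> (\<integral>\<omega>. c * indicator S \<omega> \<partial>M)"
    using bd \<open>c \<ge> 0\<close> by (intro integral_mono integrable_const_bound[where B=c])
      (auto simp: indicator_def abs_mult)
  finally show ?thesis by simp
qed

lemma integral_indicator_null:
  fixes f :: "'a \<Rightarrow> real"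
  assumes "finite_measure M" "S \<in> sets M" "measure M S = 0"
  shows "(\<integral>\<omega>. indicator S \<omega> * f \<omega> \<partial>M) = 0"
proof -
  have "S \<in> null_sets M"
    using assms by (simp add: finite_measure.emeasure_eq_measure null_sets_def)
  then have "AE \<omega> in M. indicator S \<omega> * f \<omega> = 0"
    by (rule AE_not_in[THEN eventually_mono]) simp
  then show ?thesis by (rule integral_eq_zero_AE)
qed

lemma emeasure_scaled_restricted_distr:
  assumes "finite_measure M" "f \<in> measurable M N" "S \<in> sets M" "c \<ge> 0" "B \<in> sets N"
  shows "emeasure (density (distr (density M (\<lambda>x. ennreal (indicator S x))) N f) (\<lambda>_. ennreal c)) B
       = ennreal (c * measure M (S \<inter> (f -` B \<inter> space M)))"
proof -
  have "emeasure (density (distr (density M (\<lambda>x. ennreal (indicator S x))) N f) (\<lambda>_. ennreal c)) B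
      = ennreal c * emeasure (density M (\<lambda>x. ennreal (indicator S x))) (f -` B \<inter> space M)"
    using assms by (simp add: emeasure_density_const emeasure_distr)
  also have "\<dots> = ennreal c * emeasure M (S \<inter> (f -` B \<inter> space M))"
    using assms by (subst ennreal_indicator, subst emeasure_restricted) auto
  finally show ?thesis
    using assms by (simp add: finite_measure.emeasure_eq_measure ennreal_mult)
qed

lemma integral_scaled_restricted_distr:
  fixes \<psi> :: "'b \<Rightarrow> real"
  assumes "f \<in> measurable M N" "S \<in> sets M" "c \<ge> 0" "\<psi> \<in> borel_measurable N"
  shows "(\<integral>x. \<psi> x \<partial>density (distr (density M (\<lambda>x. ennreal (indicator S x))) N f) (\<lambda>_. ennreal c))
       = c * (\<integral>\<omega>. indicator S \<omega> * \<psi> (f \<omega>) \<partial>M)"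
proof -
  have "(\<integral>x. \<psi> x \<partial>density (distr (density M (\<lambda>x. ennreal (indicator S x))) N f) (\<lambda>_. ennreal c))
      = c * (\<integral>x. \<psi> x \<partial>distr (density M (\<lambda>x. ennreal (indicator S x))) N f)"
    using assms by (subst integral_density) auto
  also have "\<dots> = c * (\<integral>\<omega>. \<psi> (f \<omega>) \<partial>density M (\<lambda>x. ennreal (indicator S x)))"
    using assms by (subst integral_distr) auto
  also have "\<dots> = c * (\<integral>\<omega>. indicator S \<omega> * \<psi> (f \<omega>) \<partial>M)"
    using assms by (subst integral_density) auto
  finally show ?thesis .
qed

lemma integral_indicator_eq_if_measure_eq:
  fixes \<psi> :: "'b \<Rightarrow> real" and f :: "'a \<Rightarrow> 'b"
  assumes "finite_measure M" "f \<in> measurable M N" "S1 \<in> sets M" "S2 \<in> sets M" "c1 \<ge> 0" "c2 \<ge> 0"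
    and eq: "\<And>B. B \<in> sets N \<Longrightarrow>
      c1 * measure M (S1 \<inter> (f -` B \<inter> space M)) = c2 * measure M (S2 \<inter> (f -` B \<inter> space M))"
    and "\<psi> \<in> borel_measurable N"
  shows "c1 * (\<integral>\<omega>. indicator S1 \<omega> * \<psi> (f \<omega>) \<partial>M) = c2 * (\<integral>\<omega>. indicator S2 \<omega> * \<psi> (f \<omega>) \<partial>M)"
proof -
  have "density (distr (density M (\<lambda>x. ennreal (indicator S1 x))) N f) (\<lambda>_. ennreal c1)
      = density (distr (density M (\<lambda>x. ennreal (indicator S2 x))) N f) (\<lambda>_. ennreal c2)"
    by (rule measure_eqI) (use assms in \<open>simp_all add: emeasure_scaled_restricted_distr\<close>)
  then show ?thesis
    using integral_scaled_restricted_distr[OF assms(2,3,5,8)]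
      integral_scaled_restricted_distr[OF assms(2,4,6,8)] by simp
qed

lemma integrable_mult_if_square_integrable:
  fixes u v :: "'a \<Rightarrow> real"
  assumes [measurable]: "u \<in> borel_measurable M" "v \<in> borel_measurable M"
    and "integrable M (\<lambda>\<omega>. (u \<omega>)\<^sup>2)" "integrable M (\<lambda>\<omega>. (v \<omega>)\<^sup>2)"
  shows "integrable M (\<lambda>\<omega>. u \<omega> * v \<omega>)"
proof (rule Bochner_Integration.integrable_bound)
  show "integrable M (\<lambda>\<omega>. (u \<omega>)\<^sup>2 + (v \<omega>)\<^sup>2)" using assms(3,4) by simp
  have "\<bar>x * y\<bar> \<le> x\<^sup>2 + y\<^sup>2" for x y :: real
  proof -
    have "2 * \<bar>x\<bar> * \<bar>y\<bar> \<le> x\<^sup>2 + y\<^sup>2" "0 \<le> \<bar>x\<bar> * \<bar>y\<bar>"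
      using sum_squares_bound[of "\<bar>x\<bar>" "\<bar>y\<bar>"] by simp_all
    then show ?thesis unfolding abs_mult by linarith
  qed
  then show "AE \<omega> in M. norm (u \<omega> * v \<omega>) \<le> norm ((u \<omega>)\<^sup>2 + (v \<omega>)\<^sup>2)" by simp
qed measurable

lemma cexp_cong: "(\<And>\<omega>. \<omega> \<in> space M \<Longrightarrow> f \<omega> = g \<omega>) \<Longrightarrow> cexp M Z z f = cexp M Z z g"
  unfolding cexp_def by (simp cong: Bochner_Integration.integral_cong)

lemma cexp_cmult: "cexp M Z z (\<lambda>\<omega>. c * f \<omega>) = c * cexp M Z z f"
  unfolding cexp_def by (simp add: mult.left_commute)

context
  fixes M :: "'a measure" and Z :: "'a \<Rightarrow> 'z" and z :: 'z
  assumes fm: "finite_measure M" and pos: "measure M {\<omega> \<in> space M. Z \<omega> = z} > 0"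
begin

lemma sets_eq_z: "{\<omega> \<in> space M. Z \<omega> = z} \<in> sets M"
  using pos measure_notin_sets by fastforce

lemma integrable_indicator_mult_eq_z:
  fixes f :: "'a \<Rightarrow> real"
  shows "integrable M f \<Longrightarrow> integrable M (\<lambda>\<omega>. indicator {\<omega> \<in> space M. Z \<omega> = z} \<omega> * f \<omega>)"
  using integrable_real_mult_indicator[OF sets_eq_z] by (simp add: mult.commute)

lemma cexp_const: "cexp M Z z (\<lambda>_. c) = c"
  using pos fm sets_eq_z by (simp add: cexp_def finite_measure.emeasure_eq_measure)

lemma cexp_add:
  "integrable M f \<Longrightarrow> integrable M g \<Longrightarrow> cexp M Z z (\<lambda>\<omega>. f \<omega> + g \<omega>) = cexp M Z z f + cexp M Z z g"
  unfolding cexp_def by (simp add: distrib_left integrable_indicator_mult_eq_z add_divide_distrib)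

lemma cexp_diff:
  "integrable M f \<Longrightarrow> integrable M g \<Longrightarrow> cexp M Z z (\<lambda>\<omega>. f \<omega> - g \<omega>) = cexp M Z z f - cexp M Z z g"
  unfolding cexp_def by (simp add: right_diff_distrib integrable_indicator_mult_eq_z diff_divide_distrib)

lemma cexp_sum:
  fixes f :: "'i \<Rightarrow> 'a \<Rightarrow> real"
  assumes "finite S" "\<And>s. s \<in> S \<Longrightarrow> integrable M (f s)"
  shows "cexp M Z z (\<lambda>\<omega>. \<Sum>s\<in>S. f s \<omega>) = (\<Sum>s\<in>S. cexp M Z z (f s))"
  unfolding cexp_def sum_distrib_left sum_divide_distrib[symmetric]
  by (rule arg_cong[where f="\<lambda>x. x / _"], rule Bochner_Integration.integral_sum)
     (use assms in \<open>auto intro: integrable_indicator_mult_eq_z\<close>)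

lemma ccov_eq_cexp:
  fixes f g :: "'a \<Rightarrow> real"
  assumes [measurable]: "f \<in> borel_measurable M" "g \<in> borel_measurable M"
    and f2: "integrable M (\<lambda>\<omega>. (f \<omega>)\<^sup>2)" and g2: "integrable M (\<lambda>\<omega>. (g \<omega>)\<^sup>2)"
  shows "ccov M Z z f g = cexp M Z z (\<lambda>\<omega>. f \<omega> * g \<omega>) - cexp M Z z f * cexp M Z z g"
proof -
  interpret finite_measure M by (rule fm)
  have "integrable M f" "integrable M g"
    using f2 g2 by (auto intro: square_integrable_imp_integrable)
  moreover have "integrable M (\<lambda>\<omega>. f \<omega> * g \<omega>)"
    by (rule integrable_mult_if_square_integrable) (use f2 g2 in auto)
  moreover have "ccov M Z z f g = cexp M Z z (\<lambda>\<omega>. (f \<omega> * g \<omega> - cexp M Z z g * f \<omega>)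
      - (cexp M Z z f * g \<omega> - cexp M Z z f * cexp M Z z g))"
    unfolding ccov_def by (rule cexp_cong) (simp add: algebra_simps)
  ultimately show ?thesis by (simp add: cexp_diff cexp_cmult cexp_const)
qed

end

lemma cvar_eq_ccov: "cvar M Z z f = ccov M Z z f f"
  unfolding cvar_def ccov_def by (simp add: power2_eq_square)

lemma finite_cell[simp]: "finite (cell n Iv Zo l z)"
  unfolding cell_def by auto

lemma finite_stratum[simp]: "finite (stratum n Zo z)"
  unfolding stratum_def by auto

lemma sum_cell: "(\<Sum>i\<in>cell n Iv Zo l z. f i) = (\<Sum>i<n. if Iv i = l \<and> Zo i = z then f i else 0)"
proof -
  have "cell n Iv Zo l z = {i \<in> {..<n}. Iv i = l \<and> Zo i = z}" unfolding cell_def by auto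
  then show ?thesis by (simp only:) (rule sum.inter_filter, simp)
qed

lemma sum_stratum: "(\<Sum>i\<in>stratum n Zo z. f i) = (\<Sum>i<n. if Zo i = z then f i else 0)"
proof -
  have "stratum n Zo z = {i \<in> {..<n}. Zo i = z}" unfolding stratum_def by auto
  then show ?thesis by (simp only:) (rule sum.inter_filter, simp)
qed

lemma card_cell: "real (card (cell n Iv Zo l z)) = (\<Sum>i<n. if Iv i = l \<and> Zo i = z then 1 else 0)"
  using sum_cell[where f="\<lambda>_. 1::real"] by simp

lemma card_stratum: "real (card (stratum n Zo z)) = (\<Sum>i<n. if Zo i = z then 1 else 0)"
  using sum_stratum[where f="\<lambda>_. 1::real"] by simp

lemma card_cell_le_card_stratum: "card (cell n Iv Zo l z) \<le> card (stratum n Zo z)"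
  by (rule card_mono) (auto simp: cell_def stratum_def)

lemma sum_stratum_eq_sum_cells:
  fixes f :: "nat \<Rightarrow> 'b::comm_monoid_add"
  assumes "\<forall>i<n. Iv i < k"
  shows "(\<Sum>i\<in>stratum n Zo z. f i) = (\<Sum>l<k. \<Sum>i\<in>cell n Iv Zo l z. f i)"
proof -
  have "stratum n Zo z = (\<Union>l<k. cell n Iv Zo l z)"
    using assms unfolding stratum_def cell_def by auto
  then show ?thesis by (simp only:) (rule sum.UNION_disjoint, auto simp: cell_def)
qed

text \<open>Patient \<open>0\<close> plays the role of the generic patient \<open>(Y\<^sup>(\<^sup>1\<^sup>), \<dots>, Y\<^sup>(\<^sup>k\<^sup>), W)\<close>; treatments are
  numbered \<open>0, \<dots>, k - 1\<close>.\<close>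

locale stratified_trial =
  fixes M :: "'a measure" and Wsp :: "'w measure"
    and k :: nat and \<pi> :: "nat \<Rightarrow> real"
    and Y :: "nat \<Rightarrow> nat \<Rightarrow> 'a \<Rightarrow> real"
    and W :: "nat \<Rightarrow> 'a \<Rightarrow> 'w"
    and gZ :: "'w \<Rightarrow> 'z" and Zs :: "'z set"
    and gX :: "'w \<Rightarrow> real^'p"
    and I :: "nat \<Rightarrow> nat \<Rightarrow> 'a \<Rightarrow> nat"
  assumes P: "prob_space M"
    and pi_range: "\<forall>l<k. 0 < \<pi> l \<and> \<pi> l < 1"
    and pi_sum: "(\<Sum>l<k. \<pi> l) = 1"
    and meas_Y: "\<forall>i l. l < k \<longrightarrow> Y i l \<in> borel_measurable M"
    and meas_W: "\<forall>i. W i \<in> measurable M Wsp"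
    and meas_gZ: "gZ \<in> measurable Wsp (count_space UNIV)"
    and meas_gX: "gX \<in> borel_measurable Wsp"
    and meas_I: "\<forall>n i. I n i \<in> measurable M (count_space UNIV)"
    and I_range: "\<forall>n i. \<forall>\<omega>\<in>space M. i < n \<longrightarrow> I n i \<omega> < k"
    and C1_indep: "prob_space.indep_vars M (\<lambda>_. pspace k Wsp) (pvec k Y W) UNIV"
    and C1_ident: "\<forall>i. distr M (pspace k Wsp) (pvec k Y W i) = distr M (pspace k Wsp) (pvec k Y W 0)"
    and C1_mom: "\<forall>l<k. integrable M (\<lambda>\<omega>. (Y 0 l \<omega>)\<^sup>2)"
    and C2: "\<forall>n (a :: nat \<Rightarrow> nat) (zs :: nat \<Rightarrow> 'z) B.
       B \<in> sets (\<Pi>\<^sub>M i\<in>{..<n}. pspace k Wsp) \<longrightarrow>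
       (let EI = {\<omega> \<in> space M. \<forall>i<n. I n i \<omega> = a i};
            ED = {\<omega> \<in> space M. (\<lambda>i\<in>{..<n}. pvec k Y W i \<omega>) \<in> B};
            EZ = {\<omega> \<in> space M. \<forall>i<n. gZ (W i \<omega>) = zs i}
        in measure M (EI \<inter> ED \<inter> EZ) * measure M EZ = measure M (EI \<inter> EZ) * measure M (ED \<inter> EZ))"
    and C3_fin: "finite Zs"
    and C3_vals: "gZ ` space Wsp \<subseteq> Zs"
    and C3_pos: "\<forall>z\<in>Zs. measure M {\<omega> \<in> space M. gZ (W 0 \<omega>) = z} > 0"
    and C3_bal: "\<forall>z\<in>Zs. \<forall>l<k. conv_in_prob M
       (\<lambda>n \<omega>. (real (card (cell n (\<lambda>i. I n i \<omega>) (\<lambda>i. gZ (W i \<omega>)) l z))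
                 - \<pi> l * real (card (stratum n (\<lambda>i. gZ (W i \<omega>)) z)))
                / real (card (stratum n (\<lambda>i. gZ (W i \<omega>)) z))) 0"
    and mom_X: "integrable M (\<lambda>\<omega>. (norm (gX (W 0 \<omega>)))\<^sup>2)"
    and posdef: "\<forall>z\<in>Zs. pos_def (cvar_vec M (\<lambda>\<omega>. gZ (W 0 \<omega>)) z (\<lambda>\<omega>. gX (W 0 \<omega>)))"
begin

sublocale prob_space M by (rule P)

abbreviation "Dsp \<equiv> pspace k Wsp"
abbreviation "D \<equiv> pvec k Y W"
abbreviation "Zo \<omega> \<equiv> \<lambda>i. gZ (W i \<omega>)"
abbreviation "Xo \<omega> \<equiv> \<lambda>i. gX (W i \<omega>)"
abbreviation "Io n \<omega> \<equiv> \<lambda>i. I n i \<omega>"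
abbreviation "Yo n \<omega> \<equiv> \<lambda>i. Y i (I n i \<omega>) \<omega>"
abbreviation "Z0 \<equiv> \<lambda>\<omega>. gZ (W 0 \<omega>)"
abbreviation "X0 \<equiv> \<lambda>\<omega>. gX (W 0 \<omega>)"
abbreviation "Cell n l z \<omega> \<equiv> cell n (Io n \<omega>) (Zo \<omega>) l z"
abbreviation "Strat n z \<omega> \<equiv> stratum n (Zo \<omega>) z"

lemma finite_measure_M: "finite_measure M"
  by unfold_locales

lemma measurable_I[measurable]: "I n i \<in> measurable M (count_space UNIV)"
  using meas_I by auto

lemma measurable_W[measurable]: "W i \<in> measurable M Wsp"
  using meas_W by auto

lemma measurable_gZ[measurable]: "gZ \<in> measurable Wsp (count_space UNIV)"
  using meas_gZ by auto

lemma measurable_gX[measurable]: "gX \<in> borel_measurable Wsp"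
  using meas_gX by auto

lemma measurable_Y[measurable]: "l < k \<Longrightarrow> Y i l \<in> borel_measurable M"
  using meas_Y by auto

lemma measurable_D[measurable]: "D i \<in> measurable M Dsp"
  unfolding pvec_def pspace_def using meas_Y by (intro measurable_Pair measurable_restrict) auto

lemma measurable_Dsp_Z[measurable]: "(\<lambda>d. gZ (snd d)) \<in> measurable Dsp (count_space UNIV)"
  unfolding pspace_def by measurable

lemma measurable_Dsp_X[measurable]: "(\<lambda>d. gX (snd d)) \<in> borel_measurable Dsp"
  unfolding pspace_def by measurable

lemma measurable_Dsp_Y[measurable]: "l < k \<Longrightarrow> (\<lambda>d. fst d l) \<in> borel_measurable Dsp"
  unfolding pspace_def by measurable

lemma measurable_vec_nth[measurable]:
  "f \<in> borel_measurable N \<Longrightarrow> (\<lambda>x. (f x :: real^'n) $ a) \<in> borel_measurable N"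
  by (erule measurable_compose[OF _ borel_measurable_continuous_onI]) (intro continuous_intros)

lemma D_Z: "gZ (snd (D i \<omega>)) = Zo \<omega> i"
  by (simp add: pvec_def)

lemma D_X: "gX (snd (D i \<omega>)) = Xo \<omega> i"
  by (simp add: pvec_def)

lemma D_Y: "l < k \<Longrightarrow> fst (D i \<omega>) l = Y i l \<omega>"
  by (simp add: pvec_def)

lemma Z_in_Zs: "\<omega> \<in> space M \<Longrightarrow> Zo \<omega> i \<in> Zs"
  using C3_vals measurable_space[OF measurable_W] by blast

lemma integral_D_eq_D0:
  fixes g :: "(nat \<Rightarrow> real) \<times> 'w \<Rightarrow> real"
  assumes [measurable]: "g \<in> borel_measurable Dsp"
  shows "(\<integral>\<omega>. g (D i \<omega>) \<partial>M) = (\<integral>\<omega>. g (D 0 \<omega>) \<partial>M)"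
  using C1_ident by (metis integral_distr measurable_D assms)

lemma integrable_D_iff_D0:
  fixes g :: "(nat \<Rightarrow> real) \<times> 'w \<Rightarrow> real"
  assumes [measurable]: "g \<in> borel_measurable Dsp"
  shows "integrable M (\<lambda>\<omega>. g (D i \<omega>)) \<longleftrightarrow> integrable M (\<lambda>\<omega>. g (D 0 \<omega>))"
  using C1_ident by (metis integrable_distr_eq measurable_D assms)

lemma integral_mult_indep_block:
  fixes F :: "(nat \<Rightarrow> real) \<times> 'w \<Rightarrow> real" and G :: "(nat \<Rightarrow> (nat \<Rightarrow> real) \<times> 'w) \<Rightarrow> real"
  assumes "i \<notin> B"
    and [measurable]: "F \<in> borel_measurable Dsp" "G \<in> borel_measurable (PiM B (\<lambda>_. Dsp))"
    and bdF: "\<And>d. \<bar>F d\<bar> \<le> a" and bdG: "\<And>v. \<bar>G v\<bar> \<le> b"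
  shows "(\<integral>\<omega>. F (D i \<omega>) * G (restrict (\<lambda>m. D m \<omega>) B) \<partial>M)
       = (\<integral>\<omega>. F (D i \<omega>) \<partial>M) * (\<integral>\<omega>. G (restrict (\<lambda>m. D m \<omega>) B) \<partial>M)"
proof -
  have "indep_var (PiM {i} (\<lambda>_. Dsp)) (\<lambda>\<omega>. restrict (\<lambda>m. D m \<omega>) {i})
         (PiM B (\<lambda>_. Dsp)) (\<lambda>\<omega>. restrict (\<lambda>m. D m \<omega>) B)"
    using assms by (intro indep_var_restrict[OF C1_indep]) auto
  then have "indep_var borel ((\<lambda>v. F (v i)) \<circ> (\<lambda>\<omega>. restrict (\<lambda>m. D m \<omega>) {i}))
         borel (G \<circ> (\<lambda>\<omega>. restrict (\<lambda>m. D m \<omega>) B))"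
    by (rule indep_var_compose) auto
  then have "indep_var borel (F \<circ> D i) borel (G \<circ> (\<lambda>\<omega>. restrict (\<lambda>m. D m \<omega>) B))"
    by (simp add: o_def)
  moreover have "integrable M (F \<circ> D i)"
    using bdF by (intro integrable_const_bound[where B=a]) auto
  moreover have "integrable M (G \<circ> (\<lambda>\<omega>. restrict (\<lambda>m. D m \<omega>) B))"
    using bdG by (intro integrable_const_bound[where B=b]) auto
  ultimately show ?thesis
    by (subst (asm) (1 2) o_def, simp add: o_def indep_var_lebesgue_integral)
qed

definition "Dv n \<omega> = (\<lambda>i\<in>{..<n}. D i \<omega>)"
definition "EZ n zs = {\<omega> \<in> space M. \<forall>i<n. Zo \<omega> i = zs i}"
definition "EI n a = {\<omega> \<in> space M. \<forall>i<n. I n i \<omega> = a i}"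

lemma measurable_Dv[measurable]: "Dv n \<in> measurable M (PiM {..<n} (\<lambda>_. Dsp))"
  unfolding Dv_def by (intro measurable_restrict) auto

lemma sets_EZ[measurable]: "EZ n zs \<in> sets M"
proof -
  have "EZ n zs = {\<omega>\<in>space M. \<forall>i\<in>{..<n}. Zo \<omega> i = zs i}" unfolding EZ_def by auto
  also have "\<dots> \<in> sets M" by measurable
  finally show ?thesis .
qed

lemma sets_EI[measurable]: "EI n a \<in> sets M"
proof -
  have "EI n a = {\<omega>\<in>space M. \<forall>i\<in>{..<n}. I n i \<omega> = a i}" unfolding EI_def by auto
  also have "\<dots> \<in> sets M" by measurable
  finally show ?thesis .
qed

lemma measure_union_EI_Int:
  assumes "finite A" "A \<subseteq> extensional {..<n}" "S \<in> sets M"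
  shows "measure M ((\<Union>a\<in>A. EI n a) \<inter> S) = (\<Sum>a\<in>A. measure M (EI n a \<inter> S))"
proof -
  have "disjoint_family_on (\<lambda>a. EI n a \<inter> S) A"
    unfolding disjoint_family_on_def
  proof (intro ballI impI)
    fix a b assume "a \<in> A" "b \<in> A" "a \<noteq> b"
    then obtain i where "i < n" "a i \<noteq> b i"
      using assms(2) by (metis PiE_restrict extensional_restrict lessThan_iff restrict_ext subsetD)
    then show "(EI n a \<inter> S) \<inter> (EI n b \<inter> S) = {}" unfolding EI_def by fastforce
  qed
  then have "measure M (\<Union>a\<in>A. EI n a \<inter> S) = (\<Sum>a\<in>A. measure M (EI n a \<inter> S))"
    using assms by (intro finite_measure_finite_Union) auto
  then show ?thesis by (simp add: Int_UN_distrib2)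
qed

lemma C2_integral:
  fixes \<psi> :: "(nat \<Rightarrow> (nat \<Rightarrow> real) \<times> 'w) \<Rightarrow> real"
  assumes A: "finite A" "A \<subseteq> extensional {..<n}"
    and [measurable]: "\<psi> \<in> borel_measurable (PiM {..<n} (\<lambda>_. Dsp))"
  shows "prob (EZ n zs) * (\<integral>\<omega>. indicator ((\<Union>a\<in>A. EI n a) \<inter> EZ n zs) \<omega> * \<psi> (Dv n \<omega>) \<partial>M)
       = prob ((\<Union>a\<in>A. EI n a) \<inter> EZ n zs) * (\<integral>\<omega>. indicator (EZ n zs) \<omega> * \<psi> (Dv n \<omega>) \<partial>M)"
proof (rule integral_indicator_eq_if_measure_eq[OF finite_measure_M measurable_Dv])
  fix B assume B: "B \<in> sets (PiM {..<n} (\<lambda>_. Dsp))"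
  let ?ED = "Dv n -` B \<inter> space M"
  have ED[measurable]: "?ED \<in> sets M" using B by measurable
  have C2_single: "prob (EI n a \<inter> ?ED \<inter> EZ n zs) * prob (EZ n zs) = prob (EI n a \<inter> EZ n zs) * prob (?ED \<inter> EZ n zs)" for a
  proof -
    have "?ED = {\<omega> \<in> space M. (\<lambda>i\<in>{..<n}. D i \<omega>) \<in> B}" unfolding Dv_def by auto
    then show ?thesis using C2[rule_format, OF B, of a zs] unfolding EI_def EZ_def Let_def by simp
  qed
  have "prob (EZ n zs) * prob ((\<Union>a\<in>A. EI n a) \<inter> EZ n zs \<inter> ?ED)
      = prob (EZ n zs) * (\<Sum>a\<in>A. prob (EI n a \<inter> ?ED \<inter> EZ n zs))"
  proof -
    have "(\<Union>a\<in>A. EI n a) \<inter> EZ n zs \<inter> ?ED = (\<Union>a\<in>A. EI n a) \<inter> (?ED \<inter> EZ n zs)"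
      "\<And>a. EI n a \<inter> ?ED \<inter> EZ n zs = EI n a \<inter> (?ED \<inter> EZ n zs)" by auto
    then show ?thesis using measure_union_EI_Int[OF A, of "?ED \<inter> EZ n zs"] by simp
  qed
  also have "\<dots> = (\<Sum>a\<in>A. prob (EI n a \<inter> EZ n zs)) * prob (?ED \<inter> EZ n zs)"
    unfolding sum_distrib_left sum_distrib_right by (intro sum.cong refl) (subst mult.commute, rule C2_single)
  also have "\<dots> = prob ((\<Union>a\<in>A. EI n a) \<inter> EZ n zs) * prob (EZ n zs \<inter> ?ED)"
    by (subst measure_union_EI_Int[OF A]) (auto simp: Int_ac)
  finally show "prob (EZ n zs) * prob ((\<Union>a\<in>A. EI n a) \<inter> EZ n zs \<inter> ?ED)
      = prob ((\<Union>a\<in>A. EI n a) \<inter> EZ n zs) * prob (EZ n zs \<inter> ?ED)" .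
qed (use A in \<open>auto intro!: sets.Int sets.finite_UN\<close>)

end

context stratified_trial
begin

definition "pZ z = prob {\<omega> \<in> space M. Z0 \<omega> = z}"

definition "cond_mean g z = (\<integral>\<omega>. indicator {\<omega> \<in> space M. Z0 \<omega> = z} \<omega> * g (D 0 \<omega>) \<partial>M) / pZ z"

definition "centred g d = g d - cond_mean g (gZ (snd d))"

lemma pZ_pos: "z \<in> Zs \<Longrightarrow> pZ z > 0"
  using C3_pos unfolding pZ_def by auto

lemma pZ_nonneg: "0 \<le> pZ z"
  unfolding pZ_def by simp

lemma pZ_le_1: "pZ z \<le> 1"
  unfolding pZ_def by simp

lemma sum_indicator_EZ:
  assumes "\<omega> \<in> space M"
  shows "(\<Sum>zs\<in>PiE {..<n} (\<lambda>_. Zs). indicator (EZ n zs) \<omega>) = (1::real)"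
proof -
  define z0 where "z0 = restrict (Zo \<omega>) {..<n}"
  have z0: "z0 \<in> PiE {..<n} (\<lambda>_. Zs)" unfolding z0_def using Z_in_Zs[OF assms] by auto
  have "\<omega> \<in> EZ n zs \<longleftrightarrow> zs = z0" if "zs \<in> PiE {..<n} (\<lambda>_. Zs)" for zs
    using that assms unfolding EZ_def z0_def by (auto simp: PiE_iff extensional_def fun_eq_iff)
  then have "(\<Sum>zs\<in>PiE {..<n} (\<lambda>_. Zs). indicator (EZ n zs) \<omega>)
      = (\<Sum>zs\<in>PiE {..<n} (\<lambda>_. Zs). if zs = z0 then 1 else (0::real))"
    by (intro sum.cong) (auto simp: indicator_def)
  also have "\<dots> = 1" using z0 C3_fin by (simp add: finite_PiE)
  finally show ?thesis .
qed

lemma integral_indicator_eq_sum_EZ: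
  fixes f :: "'a \<Rightarrow> real"
  assumes [measurable]: "S \<in> sets M" and "integrable M f"
  shows "(\<integral>\<omega>. indicator S \<omega> * f \<omega> \<partial>M)
       = (\<Sum>zs\<in>PiE {..<n} (\<lambda>_. Zs). (\<integral>\<omega>. indicator (S \<inter> EZ n zs) \<omega> * f \<omega> \<partial>M))"
proof -
  have "(\<integral>\<omega>. indicator S \<omega> * f \<omega> \<partial>M)
      = (\<integral>\<omega>. (\<Sum>zs\<in>PiE {..<n} (\<lambda>_. Zs). indicator (S \<inter> EZ n zs) \<omega> * f \<omega>) \<partial>M)"
  proof (rule Bochner_Integration.integral_cong[OF refl])
    fix \<omega> assume "\<omega> \<in> space M"
    have "(\<Sum>zs\<in>PiE {..<n} (\<lambda>_. Zs). indicator (S \<inter> EZ n zs) \<omega> * f \<omega>)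
        = indicator S \<omega> * (\<Sum>zs\<in>PiE {..<n} (\<lambda>_. Zs). indicator (EZ n zs) \<omega>) * f \<omega>"
      by (simp add: sum_distrib_left sum_distrib_right indicator_inter_arith mult.assoc)
    then show "indicator S \<omega> * f \<omega> = (\<Sum>zs\<in>PiE {..<n} (\<lambda>_. Zs). indicator (S \<inter> EZ n zs) \<omega> * f \<omega>)"
      using sum_indicator_EZ[OF \<open>\<omega> \<in> space M\<close>] by simp
  qed
  also have "\<dots> = (\<Sum>zs\<in>PiE {..<n} (\<lambda>_. Zs). (\<integral>\<omega>. indicator (S \<inter> EZ n zs) \<omega> * f \<omega> \<partial>M))"
    using integrable_mult_indicator[OF _ assms(2)] by (intro Bochner_Integration.integral_sum) simp
  finally show ?thesis .
qed

lemma integral_EI_union_eq_0: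
  fixes \<psi> :: "(nat \<Rightarrow> (nat \<Rightarrow> real) \<times> 'w) \<Rightarrow> real"
  assumes A: "finite A" "A \<subseteq> extensional {..<n}"
    and \<psi>_meas[measurable]: "\<psi> \<in> borel_measurable (PiM {..<n} (\<lambda>_. Dsp))" and bd: "\<And>v. \<bar>\<psi> v\<bar> \<le> c"
    and zero: "\<And>zs. (\<integral>\<omega>. indicator (EZ n zs) \<omega> * \<psi> (Dv n \<omega>) \<partial>M) = 0"
  shows "(\<integral>\<omega>. indicator (\<Union>a\<in>A. EI n a) \<omega> * \<psi> (Dv n \<omega>) \<partial>M) = 0"
proof -
  define S where "S = (\<Union>a\<in>A. EI n a)"
  have S[measurable]: "S \<in> sets M" unfolding S_def using A by (intro sets.finite_UN) auto
  have "integrable M (\<lambda>\<omega>. \<psi> (Dv n \<omega>))"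
    by (rule integrable_const_bound[where B=c]) (simp add: bd, measurable)
  then have "(\<integral>\<omega>. indicator S \<omega> * \<psi> (Dv n \<omega>) \<partial>M)
      = (\<Sum>zs\<in>PiE {..<n} (\<lambda>_. Zs). (\<integral>\<omega>. indicator (S \<inter> EZ n zs) \<omega> * \<psi> (Dv n \<omega>) \<partial>M))"
    by (rule integral_indicator_eq_sum_EZ[OF S])
  also have "\<dots> = 0"
  proof (intro sum.neutral ballI)
    fix zs
    show "(\<integral>\<omega>. indicator (S \<inter> EZ n zs) \<omega> * \<psi> (Dv n \<omega>) \<partial>M) = 0"
    proof (cases "prob (EZ n zs) = 0")
      case True
      then have "prob (S \<inter> EZ n zs) = 0"
        using finite_measure_mono[of "S \<inter> EZ n zs" "EZ n zs"] measure_nonneg[of M "S \<inter> EZ n zs"] by auto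
      then show ?thesis by (intro integral_indicator_null[OF finite_measure_M]) auto
    next
      case False
      then show ?thesis
        using C2_integral[OF A \<psi>_meas, of zs] zero[of zs] unfolding S_def by simp
    qed
  qed
  finally show ?thesis unfolding S_def .
qed

lemma sum_pZ_cond_mean:
  assumes [measurable]: "g \<in> borel_measurable Dsp" and "integrable M (\<lambda>\<omega>. g (D 0 \<omega>))"
  shows "(\<Sum>z\<in>Zs. pZ z * cond_mean g z) = (\<integral>\<omega>. g (D 0 \<omega>) \<partial>M)"
proof -
  have "(\<Sum>z\<in>Zs. pZ z * cond_mean g z) = (\<Sum>z\<in>Zs. (\<integral>\<omega>. indicator {\<omega> \<in> space M. Z0 \<omega> = z} \<omega> * g (D 0 \<omega>) \<partial>M))"
    using C3_pos unfolding cond_mean_def pZ_def by (intro sum.cong) auto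
  also have "\<dots> = (\<integral>\<omega>. (\<Sum>z\<in>Zs. indicator {\<omega> \<in> space M. Z0 \<omega> = z} \<omega> * g (D 0 \<omega>)) \<partial>M)"
    using integrable_mult_indicator[OF _ assms(2)] by (intro Bochner_Integration.integral_sum[symmetric]) simp
  also have "\<dots> = (\<integral>\<omega>. g (D 0 \<omega>) \<partial>M)"
    using Z_in_Zs[of _ 0] C3_fin
    by (intro Bochner_Integration.integral_cong refl) (simp add: indicator_def sum.delta)
  finally show ?thesis .
qed

lemma sum_arm_eq_centred_plus_cond_means:
  assumes "\<omega> \<in> space M"
  shows "(\<Sum>i<n. if I n i \<omega> = l then g (D i \<omega>) else 0)
       = (\<Sum>i<n. (if I n i \<omega> = l then 1 else 0) * centred g (D i \<omega>))
         + (\<Sum>z\<in>Zs. cond_mean g z * real (card (Cell n l z \<omega>)))"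
proof -
  have "cond_mean g (Zo \<omega> i) = (\<Sum>z\<in>Zs. if Zo \<omega> i = z then cond_mean g z else 0)" for i
    using Z_in_Zs[OF assms, of i] C3_fin by (simp add: sum.delta)
  then show ?thesis
    unfolding centred_def card_cell sum_distrib_left
    by (subst sum.swap) (auto simp: D_Z if_distrib sum.distrib[symmetric] intro!: sum.cong)
qed

context
  fixes g :: "(nat \<Rightarrow> real) \<times> 'w \<Rightarrow> real" and c :: real
  assumes g_meas[measurable]: "g \<in> borel_measurable Dsp" and g_bd: "\<And>d. \<bar>g d\<bar> \<le> c"
begin

lemma bound_nonneg: "c \<ge> 0"
  using g_bd[of undefined] by simp

lemma abs_cond_mean_le: "\<bar>cond_mean g z\<bar> \<le> c"
proof (cases "pZ z = 0")
  case False
  then have "pZ z > 0" unfolding pZ_def by (simp add: less_le)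
  moreover have "\<bar>\<integral>\<omega>. indicator {\<omega> \<in> space M. Z0 \<omega> = z} \<omega> * g (D 0 \<omega>) \<partial>M\<bar> \<le> c * pZ z"
    unfolding pZ_def by (rule abs_integral_indicator_le[OF finite_measure_M]) (auto intro: g_bd)
  ultimately show ?thesis unfolding cond_mean_def by (simp add: abs_divide pos_divide_le_eq)
qed (simp add: cond_mean_def bound_nonneg)

lemma abs_centred_le: "\<bar>centred g d\<bar> \<le> 2 * c"
  using g_bd[of d] abs_cond_mean_le[of "gZ (snd d)"] unfolding centred_def by linarith

lemma measurable_centred[measurable]: "centred g \<in> borel_measurable Dsp"
proof -
  have "(\<lambda>d. cond_mean g (gZ (snd d))) \<in> borel_measurable Dsp"
    by (rule measurable_compose[OF measurable_Dsp_Z]) simp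
  then show ?thesis unfolding centred_def by measurable
qed

lemma integral_centred_stratum: "(\<integral>\<omega>. indicator {\<omega> \<in> space M. Zo \<omega> i = z} \<omega> * centred g (D i \<omega>) \<partial>M) = 0"
proof -
  let ?S = "{\<omega> \<in> space M. Z0 \<omega> = z}"
  let ?F = "\<lambda>d. (if gZ (snd d) = z then 1 else 0) * centred g d"
  have [measurable]: "?F \<in> borel_measurable Dsp" by measurable
  have "(\<integral>\<omega>. indicator {\<omega> \<in> space M. Zo \<omega> i = z} \<omega> * centred g (D i \<omega>) \<partial>M) = (\<integral>\<omega>. ?F (D i \<omega>) \<partial>M)"
    by (intro Bochner_Integration.integral_cong refl) (simp add: D_Z indicator_def)
  also have "\<dots> = (\<integral>\<omega>. ?F (D 0 \<omega>) \<partial>M)" by (rule integral_D_eq_D0) simp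
  also have "\<dots> = (\<integral>\<omega>. indicator ?S \<omega> * g (D 0 \<omega>) - cond_mean g z * indicator ?S \<omega> \<partial>M)"
    by (intro Bochner_Integration.integral_cong refl) (auto simp: centred_def D_Z indicator_def)
  also have "\<dots> = (\<integral>\<omega>. indicator ?S \<omega> * g (D 0 \<omega>) \<partial>M) - cond_mean g z * pZ z"
  proof (subst Bochner_Integration.integral_diff)
    show "integrable M (\<lambda>\<omega>. indicator ?S \<omega> * g (D 0 \<omega>))"
      by (rule integrable_const_bound[where B=c]) (auto simp: indicator_def g_bd bound_nonneg)
  qed (auto simp: pZ_def emeasure_eq_measure intro!: integrable_real_indicator)
  also have "\<dots> = 0"
    by (cases "pZ z = 0") (auto simp: cond_mean_def pZ_def integral_indicator_null[OF finite_measure_M])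
  finally show ?thesis .
qed

lemma prod_indicator_real: "finite S \<Longrightarrow> (\<Prod>m\<in>S. if P m then 1 else (0::real)) = (if \<forall>m\<in>S. P m then 1 else 0)"
  by (induction S rule: finite_induct) auto

text \<open>Independence of \<open>D\<^sub>i\<close> from the other patients' data (C1) factorises the integral.\<close>

lemma integral_centred_mult_EZ:
  assumes ij: "i \<noteq> j" "i < n" "j < n"
  shows "(\<integral>\<omega>. indicator (EZ n zs) \<omega> * (centred g (D i \<omega>) * centred g (D j \<omega>)) \<partial>M) = 0"
proof -
  define B where "B = {..<n} - {i}"
  have iB: "i \<notin> B" "j \<in> B" "finite B" using ij unfolding B_def by auto
  define F1 where "F1 d = (if gZ (snd d) = zs i then 1 else 0) * centred g d" for d
  define F2 where "F2 v = (\<Prod>m\<in>B. if gZ (snd (v m)) = zs m then 1 else 0) * centred g (v j)"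
    for v :: "nat \<Rightarrow> (nat \<Rightarrow> real) \<times> 'w"
  have mF1[measurable]: "F1 \<in> borel_measurable Dsp" unfolding F1_def by measurable
  have mF2[measurable]: "F2 \<in> borel_measurable (PiM B (\<lambda>_. Dsp))"
    unfolding F2_def using iB
    by (intro borel_measurable_times borel_measurable_prod measurable_compose[OF _ measurable_centred]
        measurable_If measurable_const) (auto intro!: measurable_compose[OF _ measurable_Dsp_Z])
  have prod_bd: "\<bar>\<Prod>m\<in>B. if P m then 1 else 0 :: real\<bar> \<le> 1" for P
    using iB(3) by (simp add: prod_indicator_real)
  have bF1: "\<bar>F1 d\<bar> \<le> 2 * c" for d
    unfolding F1_def using abs_centred_le[of d] bound_nonneg by auto
  have bF2: "\<bar>F2 v\<bar> \<le> 2 * c" for v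
    unfolding F2_def abs_mult using mult_mono[OF prod_bd abs_centred_le] by simp
  have eq: "indicator (EZ n zs) \<omega> * (centred g (D i \<omega>) * centred g (D j \<omega>))
      = F1 (D i \<omega>) * F2 (restrict (\<lambda>m. D m \<omega>) B)" if "\<omega> \<in> space M" for \<omega>
  proof -
    have "indicator (EZ n zs) \<omega> = (\<Prod>m\<in>{..<n}. if Zo \<omega> m = zs m then 1 else (0::real))"
      using that unfolding EZ_def by (subst prod_indicator_real) (auto simp: indicator_def)
    also have "\<dots> = (if Zo \<omega> i = zs i then 1 else 0) * (\<Prod>m\<in>B. if Zo \<omega> m = zs m then 1 else (0::real))"
      unfolding B_def using ij by (subst prod.remove[of _ i]) auto
    finally show ?thesis unfolding F1_def F2_def using iB by (simp add: D_Z)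
  qed
  have "(\<integral>\<omega>. indicator (EZ n zs) \<omega> * (centred g (D i \<omega>) * centred g (D j \<omega>)) \<partial>M)
      = (\<integral>\<omega>. F1 (D i \<omega>) * F2 (restrict (\<lambda>m. D m \<omega>) B) \<partial>M)"
    by (rule Bochner_Integration.integral_cong[OF refl eq])
  also have "\<dots> = (\<integral>\<omega>. F1 (D i \<omega>) \<partial>M) * (\<integral>\<omega>. F2 (restrict (\<lambda>m. D m \<omega>) B) \<partial>M)"
    by (rule integral_mult_indep_block[OF iB(1) mF1 mF2 bF1 bF2])
  also have "(\<integral>\<omega>. F1 (D i \<omega>) \<partial>M)
      = (\<integral>\<omega>. indicator {\<omega> \<in> space M. Zo \<omega> i = zs i} \<omega> * centred g (D i \<omega>) \<partial>M)"
    by (intro Bochner_Integration.integral_cong refl) (simp add: F1_def D_Z indicator_def)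
  also have "\<dots> = 0" by (rule integral_centred_stratum)
  finally show ?thesis by simp
qed

lemma integral_centred_mult_assigned:
  assumes ij: "i \<noteq> j" "i < n" "j < n"
  shows "(\<integral>\<omega>. (if I n i \<omega> = l then 1 else 0) * (if I n j \<omega> = l' then 1 else 0)
              * (centred g (D i \<omega>) * centred g (D j \<omega>)) \<partial>M) = 0"
proof -
  define A where "A = {a \<in> PiE {..<n} (\<lambda>_. {..<k}). a i = l \<and> a j = l'}"
  have A: "finite A" "A \<subseteq> extensional {..<n}"
    unfolding A_def by (rule finite_subset[OF _ finite_PiE[of "{..<n}" "\<lambda>_. {..<k}"]]; auto) (auto simp: PiE_iff)
  have A_iff: "\<omega> \<in> (\<Union>a\<in>A. EI n a) \<longleftrightarrow> I n i \<omega> = l \<and> I n j \<omega> = l'" if "\<omega> \<in> space M" for \<omega>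
  proof
    assume "I n i \<omega> = l \<and> I n j \<omega> = l'"
    then have "restrict (Io n \<omega>) {..<n} \<in> A" "\<omega> \<in> EI n (restrict (Io n \<omega>) {..<n})"
      unfolding A_def EI_def using ij I_range that by (auto simp: PiE_iff)
    then show "\<omega> \<in> (\<Union>a\<in>A. EI n a)" by blast
  qed (use ij in \<open>auto simp: A_def EI_def\<close>)
  define \<psi> where "\<psi> v = centred g (v i) * centred g (v j)" for v :: "nat \<Rightarrow> (nat \<Rightarrow> real) \<times> 'w"
  have [measurable]: "(\<lambda>v. v i) \<in> measurable (PiM {..<n} (\<lambda>_. Dsp)) Dsp"
    "(\<lambda>v. v j) \<in> measurable (PiM {..<n} (\<lambda>_. Dsp)) Dsp" using ij by auto
  have [measurable]: "\<psi> \<in> borel_measurable (PiM {..<n} (\<lambda>_. Dsp))"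
    unfolding \<psi>_def by measurable
  have \<psi>_Dv: "\<psi> (Dv n \<omega>) = centred g (D i \<omega>) * centred g (D j \<omega>)" for \<omega>
    unfolding \<psi>_def Dv_def using ij by simp
  have "\<bar>\<psi> v\<bar> \<le> 2 * c * (2 * c)" for v
    unfolding \<psi>_def abs_mult using bound_nonneg by (intro mult_mono abs_centred_le) auto
  then have "(\<integral>\<omega>. indicator (\<Union>a\<in>A. EI n a) \<omega> * \<psi> (Dv n \<omega>) \<partial>M) = 0"
    using integral_centred_mult_EZ[OF ij] by (intro integral_EI_union_eq_0[OF A]) (auto simp: \<psi>_Dv)
  moreover have "indicator (\<Union>a\<in>A. EI n a) \<omega> * \<psi> (Dv n \<omega>)
      = (if I n i \<omega> = l then 1 else 0) * (if I n j \<omega> = l' then 1 else 0) * (centred g (D i \<omega>) * centred g (D j \<omega>))"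
    if "\<omega> \<in> space M" for \<omega>
    by (simp only: indicator_def of_bool_def A_iff[OF that] \<psi>_Dv) simp
  ultimately show ?thesis
    by (simp cong: Bochner_Integration.integral_cong)
qed

end

end

context stratified_trial
begin

lemma measurable_card_cell[measurable]: "(\<lambda>\<omega>. real (card (Cell n l z \<omega>))) \<in> borel_measurable M"
  unfolding card_cell by measurable

lemma measurable_card_stratum[measurable]: "(\<lambda>\<omega>. real (card (Strat n z \<omega>))) \<in> borel_measurable M"
  unfolding card_stratum by measurable

lemma stratum_frac_tendsto: "tendsto_prob M (\<lambda>n \<omega>. real (card (Strat n z \<omega>)) / real n) (pZ z)"
proof -
  define F where "F d = (if gZ (snd d) = z then 1 else 0) - pZ z" for d :: "(nat \<Rightarrow> real) \<times> 'w"
  have F_meas[measurable]: "F \<in> borel_measurable Dsp" unfolding F_def by measurable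
  have F_bd: "\<bar>F d\<bar> \<le> 1" for d unfolding F_def using pZ_le_1[of z] pZ_nonneg[of z] by auto
  have F_mean: "(\<integral>\<omega>. F (D i \<omega>) \<partial>M) = 0" for i
  proof -
    have "(\<integral>\<omega>. F (D i \<omega>) \<partial>M) = (\<integral>\<omega>. F (D 0 \<omega>) \<partial>M)" by (rule integral_D_eq_D0) simp
    also have "\<dots> = (\<integral>\<omega>. indicator {\<omega> \<in> space M. Z0 \<omega> = z} \<omega> - pZ z \<partial>M)"
      by (intro Bochner_Integration.integral_cong refl) (auto simp: F_def D_Z indicator_def)
    also have "\<dots> = 0"
      by (subst Bochner_Integration.integral_diff)
         (auto simp: pZ_def emeasure_eq_measure prob_space intro!: integrable_real_indicator)
    finally show ?thesis .
  qed
  have "tendsto_prob M (\<lambda>n \<omega>. (\<Sum>i<n. F (D i \<omega>)) / real n) 0"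
  proof (rule tendsto_prob_orthogonal_mean[OF P _ F_bd])
    fix n i j :: nat assume "i < n" "j < n" "i \<noteq> j"
    have [measurable]: "(\<lambda>v. v j) \<in> measurable (PiM {j} (\<lambda>_. Dsp)) Dsp" by simp
    have Fj: "(\<lambda>v. F (v j)) \<in> borel_measurable (PiM {j} (\<lambda>_. Dsp))" by measurable
    have "i \<notin> {j}" using \<open>i \<noteq> j\<close> by simp
    from integral_mult_indep_block[OF this F_meas Fj F_bd F_bd]
    have "(\<integral>\<omega>. F (D i \<omega>) * F (restrict (\<lambda>m. D m \<omega>) {j} j) \<partial>M)
        = (\<integral>\<omega>. F (D i \<omega>) \<partial>M) * (\<integral>\<omega>. F (restrict (\<lambda>m. D m \<omega>) {j} j) \<partial>M)" .
    then show "(\<integral>\<omega>. F (D i \<omega>) * F (D j \<omega>) \<partial>M) = 0" by (simp add: F_mean)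
  qed measurable
  then have "tendsto_prob M (\<lambda>n \<omega>. (\<Sum>i<n. F (D i \<omega>)) / real n + pZ z) (0 + pZ z)"
    by (intro tendsto_prob_add[OF finite_measure_M] tendsto_prob_const)
  then have "tendsto_prob M (\<lambda>n \<omega>. (\<Sum>i<n. F (D i \<omega>)) / real n + pZ z) (pZ z)" by simp
  then show ?thesis
  proof (rule tendsto_prob_cong_eventually[where N=1])
    fix n :: nat and \<omega> assume "n \<ge> 1"
    have "(\<Sum>i<n. F (D i \<omega>)) = real (card (Strat n z \<omega>)) - real n * pZ z"
      unfolding F_def card_stratum by (simp add: sum_subtractf D_Z)
    then show "real (card (Strat n z \<omega>)) / real n = (\<Sum>i<n. F (D i \<omega>)) / real n + pZ z"
      using \<open>n \<ge> 1\<close> by (simp add: field_simps)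
  qed
qed

text \<open>This is where the balance condition (C3) enters.\<close>

lemma cell_frac_tendsto:
  assumes "z \<in> Zs" "l < k"
  shows "tendsto_prob M (\<lambda>n \<omega>. real (card (Cell n l z \<omega>)) / real n) (\<pi> l * pZ z)"
proof -
  let ?nc = "\<lambda>n \<omega>. real (card (Cell n l z \<omega>))" and ?ns = "\<lambda>n \<omega>. real (card (Strat n z \<omega>))"
  have "tendsto_prob M (\<lambda>n \<omega>. (?nc n \<omega> - \<pi> l * ?ns n \<omega>) / ?ns n \<omega>) 0"
    by (rule conv_in_prob_imp_tendsto_prob) (use C3_bal assms in simp, measurable)
  then have "tendsto_prob M (\<lambda>n \<omega>. (?nc n \<omega> - \<pi> l * ?ns n \<omega>) / ?ns n \<omega> * (?ns n \<omega> / real n)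
               + \<pi> l * (?ns n \<omega> / real n)) (0 * pZ z + \<pi> l * pZ z)"
    by (intro tendsto_prob_add[OF finite_measure_M] tendsto_prob_mult[OF finite_measure_M]
        stratum_frac_tendsto tendsto_prob_const)
  then show ?thesis
  proof (rule tendsto_prob_cong)
    fix n \<omega>
    show "?nc n \<omega> / real n = (?nc n \<omega> - \<pi> l * ?ns n \<omega>) / ?ns n \<omega> * (?ns n \<omega> / real n) + \<pi> l * (?ns n \<omega> / real n)"
    proof (cases "?ns n \<omega> = 0")
      case True
      then have "?nc n \<omega> = 0" using card_cell_le_card_stratum[of n "Io n \<omega>" "Zo \<omega>" l z] by simp
      with True show ?thesis by simp
    next
      case False
      then have "(?nc n \<omega> - \<pi> l * ?ns n \<omega>) / ?ns n \<omega> * (?ns n \<omega> / real n) = (?nc n \<omega> - \<pi> l * ?ns n \<omega>) / real n"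
        by simp
      then show ?thesis by (simp add: diff_divide_distrib)
    qed
  qed simp
qed

text \<open>The centred parts are uncorrelated by (C1) and (C2); the stratum means contribute
  through the cell sizes.\<close>

lemma arm_mean_tendsto_bounded:
  assumes [measurable]: "g \<in> borel_measurable Dsp" and g_bd: "\<And>d. \<bar>g d\<bar> \<le> c" and l: "l < k"
  shows "tendsto_prob M (\<lambda>n \<omega>. (\<Sum>i<n. if I n i \<omega> = l then g (D i \<omega>) else 0) / real n)
           (\<pi> l * (\<integral>\<omega>. g (D 0 \<omega>) \<partial>M))"
proof -
  define \<phi> where "\<phi> n i \<omega> = (if I n i \<omega> = l then 1 else 0) * centred g (D i \<omega>)" for n i :: nat and \<omega>
  have "tendsto_prob M (\<lambda>n \<omega>. (\<Sum>i<n. \<phi> n i \<omega>) / real n) 0"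
  proof (rule tendsto_prob_orthogonal_mean[OF P])
    show "\<phi> n i \<in> borel_measurable M" for n i
      using measurable_centred[OF assms(1,2)] unfolding \<phi>_def by measurable
    show "\<bar>\<phi> n i \<omega>\<bar> \<le> 2 * c" for n i \<omega>
      unfolding \<phi>_def using abs_centred_le[OF assms(1,2)] bound_nonneg[OF assms(1,2)] by auto
    show "(\<integral>\<omega>. \<phi> n i \<omega> * \<phi> n j \<omega> \<partial>M) = 0" if "i < n" "j < n" "i \<noteq> j" for n i j
      using integral_centred_mult_assigned[OF assms(1,2) \<open>i \<noteq> j\<close> \<open>i < n\<close> \<open>j < n\<close>, of l l]
      unfolding \<phi>_def by (simp add: mult_ac)
  qed
  moreover have "tendsto_prob M (\<lambda>n \<omega>. \<Sum>z\<in>Zs. cond_mean g z * (real (card (Cell n l z \<omega>)) / real n))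
             (\<Sum>z\<in>Zs. cond_mean g z * (\<pi> l * pZ z))"
    by (intro tendsto_prob_sum[OF finite_measure_M C3_fin] tendsto_prob_mult[OF finite_measure_M]
        tendsto_prob_const cell_frac_tendsto l)
  ultimately have "tendsto_prob M (\<lambda>n \<omega>. (\<Sum>i<n. \<phi> n i \<omega>) / real n
      + (\<Sum>z\<in>Zs. cond_mean g z * (real (card (Cell n l z \<omega>)) / real n))) (0 + (\<Sum>z\<in>Zs. cond_mean g z * (\<pi> l * pZ z)))"
    by (rule tendsto_prob_add[OF finite_measure_M])
  moreover have "(\<Sum>z\<in>Zs. cond_mean g z * (\<pi> l * pZ z)) = \<pi> l * (\<integral>\<omega>. g (D 0 \<omega>) \<partial>M)"
  proof -
    have "integrable M (\<lambda>\<omega>. g (D 0 \<omega>))" by (rule integrable_const_bound[where B=c]) (simp add: g_bd, measurable)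
    then show ?thesis
      by (simp add: sum_pZ_cond_mean[symmetric] sum_distrib_left mult_ac)
  qed
  ultimately show ?thesis
    by (elim tendsto_prob_cong)
       (simp_all add: sum_arm_eq_centred_plus_cond_means \<phi>_def add_divide_distrib sum_divide_distrib)
qed

text \<open>Integrable functions are reduced to bounded ones by truncation.\<close>

lemma arm_mean_tendsto:
  assumes [measurable]: "g \<in> borel_measurable Dsp" and g_int: "integrable M (\<lambda>\<omega>. g (D 0 \<omega>))" and l: "l < k"
  shows "tendsto_prob M (\<lambda>n \<omega>. (\<Sum>i<n. if I n i \<omega> = l then g (D i \<omega>) else 0) / real n)
           (\<pi> l * (\<integral>\<omega>. g (D 0 \<omega>) \<partial>M))"
proof (rule tendsto_prob_approx[OF finite_measure_M])
  let ?r = "\<lambda>m d. \<bar>g d - clip (real m) (g d)\<bar>"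
  show "tendsto_prob M (\<lambda>n \<omega>. (\<Sum>i<n. if I n i \<omega> = l then clip (real m) (g (D i \<omega>)) else 0) / real n)
          (\<pi> l * (\<integral>\<omega>. clip (real m) (g (D 0 \<omega>)) \<partial>M))" for m
  proof (rule arm_mean_tendsto_bounded[OF _ _ l])
    show "(\<lambda>d. clip (real m) (g d)) \<in> borel_measurable Dsp" by measurable
  qed (rule abs_clip_le, simp)
  show "(\<lambda>m. \<pi> l * (\<integral>\<omega>. clip (real m) (g (D 0 \<omega>)) \<partial>M)) \<longlonglongrightarrow> \<pi> l * (\<integral>\<omega>. g (D 0 \<omega>) \<partial>M)"
    by (intro tendsto_mult_left integral_clip_tendsto g_int) measurable
  have int: "integrable M (\<lambda>\<omega>. ?r m (D i \<omega>))" for m i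
  proof -
    have "integrable M (\<lambda>\<omega>. g (D i \<omega>))" using g_int integrable_D_iff_D0[of g i] by simp
    then show ?thesis
      by (rule Bochner_Integration.integrable_bound) (measurable, simp add: abs_diff_clip_le)
  qed
  show "integrable M (\<lambda>\<omega>. (\<Sum>i<n. ?r m (D i \<omega>)) / real n)" for m n
    by (intro integrable_divide Bochner_Integration.integrable_sum int)
  show "(\<integral>\<omega>. (\<Sum>i<n. ?r m (D i \<omega>)) / real n \<partial>M) \<le> (\<integral>\<omega>. ?r m (D 0 \<omega>) \<partial>M)" if "n \<ge> 1" for m n
  proof -
    have "(\<lambda>d. ?r m d) \<in> borel_measurable Dsp" by measurable
    then have "(\<Sum>i<n. \<integral>\<omega>. ?r m (D i \<omega>) \<partial>M) = (\<Sum>i<n. \<integral>\<omega>. ?r m (D 0 \<omega>) \<partial>M)"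
      by (intro sum.cong refl integral_D_eq_D0)
    then show ?thesis using that by (simp add: Bochner_Integration.integral_sum int)
  qed
  show "(\<lambda>m. \<integral>\<omega>. ?r m (D 0 \<omega>) \<partial>M) \<longlonglongrightarrow> 0"
    by (rule integral_abs_diff_clip_tendsto[OF _ g_int]) measurable
  show "dist ((\<Sum>i<n. if I n i \<omega> = l then g (D i \<omega>) else 0) / real n)
          ((\<Sum>i<n. if I n i \<omega> = l then clip (real m) (g (D i \<omega>)) else 0) / real n)
        \<le> (\<Sum>i<n. ?r m (D i \<omega>)) / real n" for m n \<omega>
    unfolding dist_real_def diff_divide_distrib[symmetric] sum_subtractf[symmetric] abs_divide abs_of_nat
    by (intro divide_right_mono order_trans[OF sum_abs] sum_mono) auto
  show "(\<lambda>\<omega>. (\<Sum>i<n. ?r m (D i \<omega>)) / real n) \<in> borel_measurable M" for m n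
    by measurable
qed

definition cell_avg :: "nat \<Rightarrow> 'z \<Rightarrow> ((nat \<Rightarrow> real) \<times> 'w \<Rightarrow> 'b::real_normed_vector) \<Rightarrow> nat \<Rightarrow> 'a \<Rightarrow> 'b" where
  "cell_avg l z F n \<omega> = (1 / real n) *\<^sub>R (\<Sum>i\<in>Cell n l z \<omega>. F (D i \<omega>))"

definition "cell_prob l z = \<pi> l * pZ z"

lemma cell_avg_tendsto:
  fixes F :: "(nat \<Rightarrow> real) \<times> 'w \<Rightarrow> real"
  assumes [measurable]: "F \<in> borel_measurable Dsp" and F_int: "integrable M (\<lambda>\<omega>. F (D 0 \<omega>))"
    and z: "z \<in> Zs" and l: "l < k"
  shows "tendsto_prob M (cell_avg l z F) (cell_prob l z * cexp M Z0 z (\<lambda>\<omega>. F (D 0 \<omega>)))"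
proof -
  define g where "g d = (if gZ (snd d) = z then F d else 0)" for d
  have g_meas[measurable]: "g \<in> borel_measurable Dsp" unfolding g_def by measurable
  have "integrable M (\<lambda>\<omega>. g (D 0 \<omega>))"
    by (rule Bochner_Integration.integrable_bound[OF F_int]) (measurable, simp add: g_def)
  from arm_mean_tendsto[OF g_meas this l] show ?thesis
  proof (rule tendsto_prob_cong)
    show "cell_avg l z F n \<omega> = (\<Sum>i<n. if I n i \<omega> = l then g (D i \<omega>) else 0) / real n" for n \<omega>
      unfolding cell_avg_def sum_cell g_def
      by (auto simp: D_Z divide_inverse mult.commute intro!: sum.cong)
    have "(\<integral>\<omega>. g (D 0 \<omega>) \<partial>M) = (\<integral>\<omega>. indicator {\<omega> \<in> space M. Z0 \<omega> = z} \<omega> * F (D 0 \<omega>) \<partial>M)"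
      by (intro Bochner_Integration.integral_cong refl) (auto simp: g_def D_Z indicator_def)
    then show "\<pi> l * (\<integral>\<omega>. g (D 0 \<omega>) \<partial>M) = cell_prob l z * cexp M Z0 z (\<lambda>\<omega>. F (D 0 \<omega>))"
      using pZ_pos[OF z] unfolding cexp_def pZ_def cell_prob_def by simp
  qed
qed

end

subsection \<open>Population moments\<close>

context stratified_trial
begin

definition "mY l z = cexp M Z0 z (Y 0 l)"
definition "mYY l z = cexp M Z0 z (\<lambda>\<omega>. (Y 0 l \<omega>)\<^sup>2)"
definition "mX z = (\<chi> a. cexp M Z0 z (\<lambda>\<omega>. X0 \<omega> $ a))"
definition "mXY l z = (\<chi> a. cexp M Z0 z (\<lambda>\<omega>. Y 0 l \<omega> * X0 \<omega> $ a))"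
definition "mXX z = (\<chi> a b. cexp M Z0 z (\<lambda>\<omega>. X0 \<omega> $ a * X0 \<omega> $ b))"

definition "VX z = mXX z - outer (mX z) (mX z)"
definition "CXY l z = mXY l z - mY l z *\<^sub>R mX z"
definition "beta l z = matrix_inv (VX z) *v CXY l z"

text \<open>\<open>var(Y\<^sup>(\<^sup>l\<^sup>) - X\<^sup>T b | Z = z)\<close> in terms of conditional moments.\<close>

definition "res_var l z b = mYY l z - 2 * (b \<bullet> mXY l z) + b \<bullet> (mXX z *v b) - (mY l z - b \<bullet> mX z)\<^sup>2"

lemma Z0_pos: "z \<in> Zs \<Longrightarrow> measure M {\<omega> \<in> space M. Z0 \<omega> = z} > 0"
  using C3_pos by blast

lemma cell_prob_pos: "l < k \<Longrightarrow> z \<in> Zs \<Longrightarrow> cell_prob l z > 0"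
  unfolding cell_prob_def using pi_range pZ_pos by auto

lemma sum_cell_prob: "(\<Sum>l<k. cell_prob l z) = pZ z"
  unfolding cell_prob_def using pi_sum by (simp flip: sum_distrib_right)

lemma integrable_Y_sq: "l < k \<Longrightarrow> integrable M (\<lambda>\<omega>. (Y 0 l \<omega>)\<^sup>2)"
  using C1_mom by auto

lemma integrable_Y: "l < k \<Longrightarrow> integrable M (Y 0 l)"
  by (rule square_integrable_imp_integrable) (auto intro: integrable_Y_sq)

lemma integrable_X_sq: "integrable M (\<lambda>\<omega>. (X0 \<omega> $ a)\<^sup>2)"
proof (rule Bochner_Integration.integrable_bound[OF mom_X])
  have "\<bar>X0 \<omega> $ a\<bar>\<^sup>2 \<le> (norm (X0 \<omega>))\<^sup>2" for \<omega>
    by (rule power_mono[OF component_le_norm_cart]) simp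
  then show "AE \<omega> in M. norm ((X0 \<omega> $ a)\<^sup>2) \<le> norm ((norm (X0 \<omega>))\<^sup>2)"
    by (intro AE_I2) simp
qed measurable

lemma integrable_X: "integrable M (\<lambda>\<omega>. X0 \<omega> $ a)"
  by (rule square_integrable_imp_integrable) (auto intro: integrable_X_sq)

text \<open>By Cauchy-Schwarz.\<close>

lemma integrable_YX: "l < k \<Longrightarrow> integrable M (\<lambda>\<omega>. Y 0 l \<omega> * X0 \<omega> $ a)"
  by (rule integrable_mult_if_square_integrable) (auto intro: integrable_Y_sq integrable_X_sq)

lemma integrable_XX: "integrable M (\<lambda>\<omega>. X0 \<omega> $ a * X0 \<omega> $ b)"
  by (rule integrable_mult_if_square_integrable) (auto intro: integrable_X_sq)

lemma cvar_vec_X: "z \<in> Zs \<Longrightarrow> cvar_vec M Z0 z X0 = VX z"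
  unfolding cvar_vec_def VX_def mXX_def mX_def outer_def
  by (simp add: vec_eq_iff ccov_eq_cexp[OF finite_measure_M Z0_pos] integrable_X_sq)

lemma ccov_vec_XY: "z \<in> Zs \<Longrightarrow> l < k \<Longrightarrow> ccov_vec M Z0 z X0 (Y 0 l) = CXY l z"
  unfolding ccov_vec_def CXY_def mXY_def mX_def mY_def
  by (simp add: vec_eq_iff ccov_eq_cexp[OF finite_measure_M Z0_pos] integrable_X_sq integrable_Y_sq
      mult.commute)

lemma beta_pop_eq_beta: "z \<in> Zs \<Longrightarrow> l < k \<Longrightarrow> beta_pop M Z0 X0 (Y 0 l) z = beta l z"
  unfolding beta_pop_def beta_def by (simp add: cvar_vec_X ccov_vec_XY)

lemma beta_bar_eq: "z \<in> Zs \<Longrightarrow> beta_bar M Z0 X0 (\<lambda>l. Y 0 l) \<pi> k z = (\<Sum>l<k. \<pi> l *\<^sub>R beta l z)"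
  unfolding beta_bar_def by (simp add: beta_pop_eq_beta)

lemma det_VX_nonzero: "z \<in> Zs \<Longrightarrow> det (VX z) \<noteq> 0"
  using posdef det_nonzero_if_pos_def cvar_vec_X by metis

lemma cvar_Y:
  assumes "z \<in> Zs" "l < k"
  shows "cvar M Z0 z (Y 0 l) = mYY l z - (mY l z)\<^sup>2"
proof -
  have [measurable]: "Y 0 l \<in> borel_measurable M" using assms(2) by simp
  have "ccov M Z0 z (Y 0 l) (Y 0 l) = cexp M Z0 z (\<lambda>\<omega>. Y 0 l \<omega> * Y 0 l \<omega>) - cexp M Z0 z (Y 0 l) * cexp M Z0 z (Y 0 l)"
    by (rule ccov_eq_cexp[OF finite_measure_M Z0_pos[OF assms(1)]]) (simp_all add: integrable_Y_sq assms(2))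
  then show ?thesis unfolding cvar_eq_ccov mYY_def mY_def by (simp add: power2_eq_square)
qed

context
  fixes l z and b :: "real^'p" assumes l: "l < k" and z: "z \<in> Zs"
begin

lemma inner_X_eq_sum: "X0 \<omega> \<bullet> b = (\<Sum>a\<in>UNIV. b $ a * X0 \<omega> $ a)"
  by (simp add: inner_vec_def mult.commute)

lemma residual_sq_eq_sum: "(Y 0 l \<omega> - X0 \<omega> \<bullet> b)\<^sup>2
    = (Y 0 l \<omega>)\<^sup>2 - 2 * (\<Sum>a\<in>UNIV. b $ a * (Y 0 l \<omega> * X0 \<omega> $ a))
      + (\<Sum>a\<in>UNIV. \<Sum>c\<in>UNIV. b $ a * b $ c * (X0 \<omega> $ a * X0 \<omega> $ c))"
  unfolding inner_X_eq_sum power2_eq_square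
  by (simp add: algebra_simps sum_distrib_left sum_distrib_right sum.distrib)

lemma cexp_residual: "cexp M Z0 z (\<lambda>\<omega>. Y 0 l \<omega> - X0 \<omega> \<bullet> b) = mY l z - b \<bullet> mX z"
  using integrable_Y[OF l] integrable_X
  unfolding inner_X_eq_sum mY_def mX_def
  by (simp add: cexp_diff[OF finite_measure_M Z0_pos[OF z]] cexp_sum[OF finite_measure_M Z0_pos[OF z]]
      cexp_cmult inner_vec_def mult.commute)

lemma cexp_residual_sq:
  "cexp M Z0 z (\<lambda>\<omega>. (Y 0 l \<omega> - X0 \<omega> \<bullet> b)\<^sup>2) = mYY l z - 2 * (b \<bullet> mXY l z) + b \<bullet> (mXX z *v b)"
proof -
  note cexp_rules = cexp_add[OF finite_measure_M Z0_pos[OF z]] cexp_diff[OF finite_measure_M Z0_pos[OF z]]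
    cexp_sum[OF finite_measure_M Z0_pos[OF z]] cexp_cmult
  have "cexp M Z0 z (\<lambda>\<omega>. (Y 0 l \<omega> - X0 \<omega> \<bullet> b)\<^sup>2)
      = mYY l z - 2 * (\<Sum>a\<in>UNIV. b $ a * mXY l z $ a) + (\<Sum>a\<in>UNIV. \<Sum>c\<in>UNIV. b $ a * b $ c * mXX z $ a $ c)"
    unfolding residual_sq_eq_sum mYY_def mXY_def mXX_def
    using l by (simp add: cexp_rules integrable_Y_sq integrable_YX integrable_XX
        Bochner_Integration.integrable_sum Bochner_Integration.integrable_diff integrable_mult_right)
  then show ?thesis
    by (simp add: inner_vec_def matrix_vector_mult_def sum_distrib_left mult_ac)
qed

lemma cvar_residual: "cvar M Z0 z (\<lambda>\<omega>. Y 0 l \<omega> - X0 \<omega> \<bullet> b) = res_var l z b"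
proof -
  let ?h = "\<lambda>\<omega>. Y 0 l \<omega> - X0 \<omega> \<bullet> b"
  have "integrable M (\<lambda>\<omega>. (?h \<omega>)\<^sup>2)"
    unfolding residual_sq_eq_sum using l
    by (intro Bochner_Integration.integrable_add Bochner_Integration.integrable_diff
        integrable_mult_right Bochner_Integration.integrable_sum integrable_Y_sq integrable_YX integrable_XX)
  moreover have "?h \<in> borel_measurable M" using l by measurable
  ultimately have "cvar M Z0 z ?h = cexp M Z0 z (\<lambda>\<omega>. (?h \<omega>)\<^sup>2) - (cexp M Z0 z ?h)\<^sup>2"
    unfolding cvar_eq_ccov by (simp add: ccov_eq_cexp[OF finite_measure_M Z0_pos[OF z]] power2_eq_square)
  then show ?thesis
    unfolding res_var_def cexp_residual cexp_residual_sq .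
qed

end

lemma integral_fun_Z0:
  fixes \<phi> :: "'z \<Rightarrow> real"
  shows "(\<integral>\<omega>. \<phi> (Z0 \<omega>) \<partial>M) = (\<Sum>z\<in>Zs. pZ z * \<phi> z)"
proof -
  have "(\<integral>\<omega>. \<phi> (Z0 \<omega>) \<partial>M) = (\<integral>\<omega>. (\<Sum>z\<in>Zs. \<phi> z * indicator {\<omega> \<in> space M. Z0 \<omega> = z} \<omega>) \<partial>M)"
  proof (rule Bochner_Integration.integral_cong[OF refl])
    fix \<omega> assume "\<omega> \<in> space M"
    then have "(\<Sum>z\<in>Zs. \<phi> z * indicator {\<omega> \<in> space M. Z0 \<omega> = z} \<omega>) = (\<Sum>z\<in>Zs. if Z0 \<omega> = z then \<phi> z else 0)"
      by (intro sum.cong) (auto simp: indicator_def)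
    also have "\<dots> = \<phi> (Z0 \<omega>)" using Z_in_Zs[OF \<open>\<omega> \<in> space M\<close>, of 0] C3_fin by (simp add: sum.delta)
    finally show "\<phi> (Z0 \<omega>) = (\<Sum>z\<in>Zs. \<phi> z * indicator {\<omega> \<in> space M. Z0 \<omega> = z} \<omega>)" by simp
  qed
  also have "\<dots> = (\<Sum>z\<in>Zs. \<phi> z * pZ z)"
    by (subst Bochner_Integration.integral_sum)
       (auto simp: pZ_def emeasure_eq_measure intro!: integrable_mult_right integrable_real_indicator)
  finally show ?thesis by (simp add: mult.commute)
qed

lemma sum_pZ: "(\<Sum>z\<in>Zs. pZ z) = 1"
  using integral_fun_Z0[of "\<lambda>_. 1"] by (simp add: prob_space)

lemma pvar_fun_Z0:
  fixes \<psi> :: "'z \<Rightarrow> real"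
  shows "pvar M (\<lambda>\<omega>. \<psi> (Z0 \<omega>)) = (\<Sum>z\<in>Zs. pZ z * (\<psi> z)\<^sup>2) - (\<Sum>z\<in>Zs. pZ z * \<psi> z)\<^sup>2"
proof -
  define c where "c = (\<Sum>z\<in>Zs. pZ z * \<psi> z)"
  have "pvar M (\<lambda>\<omega>. \<psi> (Z0 \<omega>)) = (\<Sum>z\<in>Zs. pZ z * (\<psi> z - c)\<^sup>2)"
    unfolding pvar_def integral_fun_Z0 c_def by (rule integral_fun_Z0)
  also have "\<dots> = (\<Sum>z\<in>Zs. pZ z * (\<psi> z)\<^sup>2) - 2 * c * (\<Sum>z\<in>Zs. pZ z * \<psi> z) + c\<^sup>2 * (\<Sum>z\<in>Zs. pZ z)"
    by (simp add: power2_eq_square algebra_simps sum.distrib sum_subtractf sum_distrib_left sum_distrib_right)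
  also have "\<dots> = (\<Sum>z\<in>Zs. pZ z * (\<psi> z)\<^sup>2) - c\<^sup>2"
    unfolding sum_pZ c_def[symmetric] by (simp add: power2_eq_square)
  finally show ?thesis unfolding c_def .
qed

end

subsection \<open>Estimators as functions of cell averages\<close>

context stratified_trial
begin

abbreviation "avgN l z \<equiv> cell_avg l z (\<lambda>_. 1::real)"
abbreviation "avgY l z \<equiv> cell_avg l z (\<lambda>d. fst d l)"
abbreviation "avgYY l z \<equiv> cell_avg l z (\<lambda>d. (fst d l)\<^sup>2)"
abbreviation "avgX l z \<equiv> cell_avg l z (\<lambda>d. gX (snd d))"
abbreviation "avgXY l z \<equiv> cell_avg l z (\<lambda>d. fst d l *\<^sub>R gX (snd d))"
abbreviation "avgXX l z \<equiv> cell_avg l z (\<lambda>d. outer (gX (snd d)) (gX (snd d)))"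

lemma sum_cell_eq_cell_avg: "n > 0 \<Longrightarrow> (\<Sum>i\<in>Cell n l z \<omega>. F (D i \<omega>)) = real n *\<^sub>R cell_avg l z F n \<omega>"
  unfolding cell_avg_def by simp

context
  fixes n l :: nat and z :: 'z and \<omega> :: 'a assumes n: "n > 0" and l: "l < k"
begin

lemma Yo_eq_D: "i \<in> Cell n l z \<omega> \<Longrightarrow> Yo n \<omega> i = fst (D i \<omega>) l"
  using l by (simp add: cell_def D_Y)

lemma card_cell_eq_avgN: "real (card (Cell n l z \<omega>)) = real n * avgN l z n \<omega>"
  using sum_cell_eq_cell_avg[OF n, where l=l and z=z and \<omega>=\<omega> and F="\<lambda>_. 1::real"] by simp

lemma sum_cell_Yo: "(\<Sum>i\<in>Cell n l z \<omega>. Yo n \<omega> i) = real n * avgY l z n \<omega>"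
  using sum_cell_eq_cell_avg[OF n, where l=l and z=z and \<omega>=\<omega> and F="\<lambda>d. fst d l"] by (simp add: Yo_eq_D cong: sum.cong)

lemma sum_cell_Yo_sq: "(\<Sum>i\<in>Cell n l z \<omega>. (Yo n \<omega> i)\<^sup>2) = real n * avgYY l z n \<omega>"
  using sum_cell_eq_cell_avg[OF n, where l=l and z=z and \<omega>=\<omega> and F="\<lambda>d. (fst d l)\<^sup>2"] by (simp add: Yo_eq_D cong: sum.cong)

lemma sum_cell_Xo: "(\<Sum>i\<in>Cell n l z \<omega>. Xo \<omega> i) = real n *\<^sub>R avgX l z n \<omega>"
  using sum_cell_eq_cell_avg[OF n, where l=l and z=z and \<omega>=\<omega> and F="\<lambda>d. gX (snd d)"] by (simp add: D_X)

lemma sum_cell_YXo: "(\<Sum>i\<in>Cell n l z \<omega>. Yo n \<omega> i *\<^sub>R Xo \<omega> i) = real n *\<^sub>R avgXY l z n \<omega>"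
  using sum_cell_eq_cell_avg[OF n, where l=l and z=z and \<omega>=\<omega> and F="\<lambda>d. fst d l *\<^sub>R gX (snd d)"]
  by (simp add: Yo_eq_D D_X cong: sum.cong)

lemma sum_cell_XXo: "(\<Sum>i\<in>Cell n l z \<omega>. outer (Xo \<omega> i) (Xo \<omega> i)) = real n *\<^sub>R avgXX l z n \<omega>"
  using sum_cell_eq_cell_avg[OF n, where l=l and z=z and \<omega>=\<omega> and F="\<lambda>d. outer (gX (snd d)) (gX (snd d))"] by (simp add: D_X)

lemma Ybar_eq: "Ybar n (Io n \<omega>) (Zo \<omega>) (Yo n \<omega>) l z = avgY l z n \<omega> / avgN l z n \<omega>"
  unfolding Ybar_def smean_def sum_cell_Yo card_cell_eq_avgN using n by simp

lemma svar_cell_eq: "svar (Cell n l z \<omega>) (Yo n \<omega>)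
    = svar_of_sums (avgN l z n \<omega>) (1 / real n) (avgY l z n \<omega>) (avgYY l z n \<omega>)"
  unfolding svar_eq_svar_of_sums[OF finite_cell n] sum_cell_Yo sum_cell_Yo_sq card_cell_eq_avgN
  using n by simp

lemma scp_cell_eq: "scp (Cell n l z \<omega>) (Xo \<omega>) = real n *\<^sub>R centred_cp (avgN l z n \<omega>) (avgX l z n \<omega>) (avgXX l z n \<omega>)"
  unfolding scp_eq_sums[OF finite_cell] sum_cell_Xo sum_cell_XXo card_cell_eq_avgN centred_cp_def outer_scaleR
  using n by (simp add: scaleR_diff_right)

lemma scross_cell_eq: "scross (Cell n l z \<omega>) (Xo \<omega>) (Yo n \<omega>)
    = real n *\<^sub>R centred_cross (avgN l z n \<omega>) (avgY l z n \<omega>) (avgX l z n \<omega>) (avgXY l z n \<omega>)"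
  unfolding scross_eq_sums sum_cell_Xo sum_cell_YXo sum_cell_Yo card_cell_eq_avgN centred_cross_def
  using n by (simp add: scaleR_diff_right)

lemma svar_residual_cell_eq: "svar (Cell n l z \<omega>) (\<lambda>i. Yo n \<omega> i - Xo \<omega> i \<bullet> b)
    = svar_of_sums (avgN l z n \<omega>) (1 / real n) (avgY l z n \<omega> - b \<bullet> avgX l z n \<omega>)
        (avgYY l z n \<omega> - 2 * (b \<bullet> avgXY l z n \<omega>) + b \<bullet> (avgXX l z n \<omega> *v b))"
  unfolding svar_eq_svar_of_sums[OF finite_cell n] sum_residual_sums sum_cell_Yo sum_cell_Yo_sq
    sum_cell_Xo sum_cell_YXo sum_cell_XXo card_cell_eq_avgN
  using n by (simp add: scaleR_matrix_vector_assoc[symmetric] diff_divide_distrib add_divide_distrib)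

lemma beta_hat_eq: "beta_hat n (Io n \<omega>) (Zo \<omega>) (Xo \<omega>) (Yo n \<omega>) l z
    = matrix_inv (real n *\<^sub>R centred_cp (avgN l z n \<omega>) (avgX l z n \<omega>) (avgXX l z n \<omega>))
        *v (real n *\<^sub>R centred_cross (avgN l z n \<omega>) (avgY l z n \<omega>) (avgX l z n \<omega>) (avgXY l z n \<omega>))"
  unfolding beta_hat_def scp_cell_eq scross_cell_eq ..

end

lemma sum_stratum_eq_sum_cell_avg:
  assumes "\<omega> \<in> space M" "n > 0"
  shows "(\<Sum>i\<in>Strat n z \<omega>. F (D i \<omega>)) = real n *\<^sub>R (\<Sum>l<k. cell_avg l z F n \<omega>)"
proof -
  have "\<forall>i<n. Io n \<omega> i < k" using I_range assms(1) by blast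
  then show ?thesis
    by (simp add: sum_stratum_eq_sum_cells[where k=k] sum_cell_eq_cell_avg[OF assms(2)] scaleR_sum_right)
qed

lemma scov_stratum_eq:
  assumes "\<omega> \<in> space M" "n > 0"
  shows "scov (Strat n z \<omega>) (Xo \<omega>)
    = (1 / (real (card (Strat n z \<omega>)) / real n - 1 / real n)) *\<^sub>R
        centred_cp (real (card (Strat n z \<omega>)) / real n) (\<Sum>l<k. avgX l z n \<omega>) (\<Sum>l<k. avgXX l z n \<omega>)"
proof -
  define m where "m = real (card (Strat n z \<omega>))"
  have sx: "(\<Sum>i\<in>Strat n z \<omega>. Xo \<omega> i) = real n *\<^sub>R (\<Sum>l<k. avgX l z n \<omega>)"
    using sum_stratum_eq_sum_cell_avg[OF assms, where F="\<lambda>d. gX (snd d)"] by (simp add: D_X)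
  have sxx: "(\<Sum>i\<in>Strat n z \<omega>. outer (Xo \<omega> i) (Xo \<omega> i)) = real n *\<^sub>R (\<Sum>l<k. avgXX l z n \<omega>)"
    using sum_stratum_eq_sum_cell_avg[OF assms, where F="\<lambda>d. outer (gX (snd d)) (gX (snd d))"]
    by (simp add: D_X)
  have "scov (Strat n z \<omega>) (Xo \<omega>) = (1 / (m - 1)) *\<^sub>R (real n *\<^sub>R (\<Sum>l<k. avgXX l z n \<omega>)
      - (1 / m) *\<^sub>R ((real n * real n) *\<^sub>R outer (\<Sum>l<k. avgX l z n \<omega>) (\<Sum>l<k. avgX l z n \<omega>)))"
    unfolding scov_def scp_eq_sums[OF finite_stratum] sx sxx outer_scaleR m_def by simp
  also have "\<dots> = (1 / (m / real n - 1 / real n)) *\<^sub>R centred_cp (m / real n) (\<Sum>l<k. avgX l z n \<omega>) (\<Sum>l<k. avgXX l z n \<omega>)"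
  proof (cases "m = 0")
    case False
    have "1 / (m / real n - 1 / real n) = real n / (m - 1)"
      using assms(2) by (simp add: field_simps diff_divide_distrib[symmetric])
    then show ?thesis unfolding centred_cp_def using assms(2) False
      by (simp add: scaleR_diff_right field_simps)
  qed (simp add: centred_cp_def)
  finally show ?thesis unfolding m_def .
qed

lemma beta_pool_eq:
  assumes "n > 0"
  shows "beta_pool k n (Io n \<omega>) (Zo \<omega>) (Xo \<omega>) (Yo n \<omega>) z
    = matrix_inv (real n *\<^sub>R (\<Sum>l<k. centred_cp (avgN l z n \<omega>) (avgX l z n \<omega>) (avgXX l z n \<omega>)))
        *v (real n *\<^sub>R (\<Sum>l<k. centred_cross (avgN l z n \<omega>) (avgY l z n \<omega>) (avgX l z n \<omega>) (avgXY l z n \<omega>)))"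
  unfolding beta_pool_def scaleR_sum_right
  by (intro arg_cong2[where f="\<lambda>A b. matrix_inv A *v b"] sum.cong refl scp_cell_eq[OF assms]
      scross_cell_eq[OF assms]) auto

end

context stratified_trial
begin

lemma cell_avg_component: "cell_avg l z F n \<omega> $ a = cell_avg l z (\<lambda>d. F d $ a) n \<omega>"
  unfolding cell_avg_def by (simp add: sum_component)

lemma tendsto_prob_n_inverse: "tendsto_prob M (\<lambda>n \<omega>. 1 / real n) 0"
  by (rule tendsto_prob_deterministic) (rule lim_const_over_n)

context
  fixes l z assumes l: "l < k" and z: "z \<in> Zs"
begin

lemma avgN_tendsto: "tendsto_prob M (avgN l z) (cell_prob l z)"
proof -
  have "tendsto_prob M (avgN l z) (cell_prob l z * cexp M Z0 z (\<lambda>_. 1))"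
    by (rule cell_avg_tendsto[OF _ _ z l]) simp_all
  then show ?thesis by (simp add: cexp_const[OF finite_measure_M Z0_pos[OF z]])
qed

lemma avgY_tendsto: "tendsto_prob M (avgY l z) (cell_prob l z * mY l z)"
proof -
  have "tendsto_prob M (avgY l z) (cell_prob l z * cexp M Z0 z (\<lambda>\<omega>. fst (D 0 \<omega>) l))"
    by (rule cell_avg_tendsto[OF measurable_Dsp_Y[OF l] _ z l]) (simp add: D_Y l integrable_Y)
  then show ?thesis using l by (simp add: D_Y mY_def)
qed

lemma avgYY_tendsto: "tendsto_prob M (avgYY l z) (cell_prob l z * mYY l z)"
proof -
  have [measurable]: "(\<lambda>d. fst d l) \<in> borel_measurable Dsp" by (rule measurable_Dsp_Y[OF l])
  have "tendsto_prob M (avgYY l z) (cell_prob l z * cexp M Z0 z (\<lambda>\<omega>. (fst (D 0 \<omega>) l)\<^sup>2))"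
    by (rule cell_avg_tendsto[OF _ _ z l]) (measurable, simp add: D_Y l integrable_Y_sq)
  then show ?thesis using l by (simp add: D_Y mYY_def)
qed

lemma avgX_tendsto: "tendsto_prob M (avgX l z) (cell_prob l z *\<^sub>R mX z)"
proof (rule tendsto_prob_vec[OF finite_measure_M])
  fix a
  have "tendsto_prob M (cell_avg l z (\<lambda>d. gX (snd d) $ a))
      (cell_prob l z * cexp M Z0 z (\<lambda>\<omega>. gX (snd (D 0 \<omega>)) $ a))"
    by (rule cell_avg_tendsto[OF _ _ z l]) (measurable, simp add: D_X integrable_X)
  then show "tendsto_prob M (\<lambda>n \<omega>. avgX l z n \<omega> $ a) ((cell_prob l z *\<^sub>R mX z) $ a)"
    by (simp add: cell_avg_component D_X mX_def)
qed

lemma avgXY_tendsto: "tendsto_prob M (avgXY l z) (cell_prob l z *\<^sub>R mXY l z)"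
proof (rule tendsto_prob_vec[OF finite_measure_M])
  fix a
  have [measurable]: "(\<lambda>d. fst d l) \<in> borel_measurable Dsp" by (rule measurable_Dsp_Y[OF l])
  have "tendsto_prob M (cell_avg l z (\<lambda>d. fst d l * gX (snd d) $ a))
      (cell_prob l z * cexp M Z0 z (\<lambda>\<omega>. fst (D 0 \<omega>) l * gX (snd (D 0 \<omega>)) $ a))"
    by (rule cell_avg_tendsto[OF _ _ z l]) (measurable, simp add: D_X D_Y l integrable_YX)
  then show "tendsto_prob M (\<lambda>n \<omega>. avgXY l z n \<omega> $ a) ((cell_prob l z *\<^sub>R mXY l z) $ a)"
    using l by (simp add: cell_avg_component D_X D_Y mXY_def)
qed

lemma avgXX_tendsto: "tendsto_prob M (avgXX l z) (cell_prob l z *\<^sub>R mXX z)"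
proof (intro tendsto_prob_vec[OF finite_measure_M])
  fix a b
  have "tendsto_prob M (cell_avg l z (\<lambda>d. gX (snd d) $ a * gX (snd d) $ b))
      (cell_prob l z * cexp M Z0 z (\<lambda>\<omega>. gX (snd (D 0 \<omega>)) $ a * gX (snd (D 0 \<omega>)) $ b))"
    by (rule cell_avg_tendsto[OF _ _ z l]) (measurable, simp add: D_X integrable_XX)
  then show "tendsto_prob M (\<lambda>n \<omega>. avgXX l z n \<omega> $ a $ b) ((cell_prob l z *\<^sub>R mXX z) $ a $ b)"
    by (simp add: cell_avg_component D_X mXX_def outer_def)
qed

lemma centred_cp_tendsto:
  "tendsto_prob M (\<lambda>n \<omega>. centred_cp (avgN l z n \<omega>) (avgX l z n \<omega>) (avgXX l z n \<omega>)) (cell_prob l z *\<^sub>R VX z)"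
proof -
  have "tendsto_prob M (\<lambda>n \<omega>. avgXX l z n \<omega> - (1 / avgN l z n \<omega>) *\<^sub>R outer (avgX l z n \<omega>) (avgX l z n \<omega>))
      (cell_prob l z *\<^sub>R mXX z - (1 / cell_prob l z) *\<^sub>R outer (cell_prob l z *\<^sub>R mX z) (cell_prob l z *\<^sub>R mX z))"
    using cell_prob_pos[OF l z] finite_measure_M
    by (intro tendsto_prob_diff tendsto_prob_scaleR tendsto_prob_divide tendsto_prob_outer tendsto_prob_const
        avgN_tendsto avgX_tendsto avgXX_tendsto) auto
  then show ?thesis
    unfolding centred_cp_def VX_def outer_scaleR using cell_prob_pos[OF l z] by (simp add: scaleR_diff_right)
qed

lemma centred_cross_tendsto:
  "tendsto_prob M (\<lambda>n \<omega>. centred_cross (avgN l z n \<omega>) (avgY l z n \<omega>) (avgX l z n \<omega>) (avgXY l z n \<omega>))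
     (cell_prob l z *\<^sub>R CXY l z)"
proof -
  have "tendsto_prob M (\<lambda>n \<omega>. avgXY l z n \<omega> - (avgY l z n \<omega> / avgN l z n \<omega>) *\<^sub>R avgX l z n \<omega>)
      (cell_prob l z *\<^sub>R mXY l z - (cell_prob l z * mY l z / cell_prob l z) *\<^sub>R (cell_prob l z *\<^sub>R mX z))"
    using cell_prob_pos[OF l z] finite_measure_M
    by (intro tendsto_prob_diff tendsto_prob_scaleR tendsto_prob_divide
        avgN_tendsto avgY_tendsto avgX_tendsto avgXY_tendsto) auto
  then show ?thesis
    unfolding centred_cross_def CXY_def using cell_prob_pos[OF l z] by (simp add: scaleR_diff_right mult.commute)
qed

lemma Ybar_tendsto: "tendsto_prob M (\<lambda>n \<omega>. Ybar n (Io n \<omega>) (Zo \<omega>) (Yo n \<omega>) l z) (mY l z)"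
proof -
  have "tendsto_prob M (\<lambda>n \<omega>. avgY l z n \<omega> / avgN l z n \<omega>) (cell_prob l z * mY l z / cell_prob l z)"
    using cell_prob_pos[OF l z] by (intro tendsto_prob_divide[OF finite_measure_M] avgN_tendsto avgY_tendsto) auto
  then have "tendsto_prob M (\<lambda>n \<omega>. avgY l z n \<omega> / avgN l z n \<omega>) (mY l z)"
    using cell_prob_pos[OF l z] by simp
  then show ?thesis by (rule tendsto_prob_cong_eventually[where N=1]) (simp add: Ybar_eq l)
qed

lemma svar_cell_tendsto: "tendsto_prob M (\<lambda>n \<omega>. svar (Cell n l z \<omega>) (Yo n \<omega>)) (cvar M Z0 z (Y 0 l))"
proof -
  have "tendsto_prob M (\<lambda>n \<omega>. svar_of_sums (avgN l z n \<omega>) (1 / real n) (avgY l z n \<omega>) (avgYY l z n \<omega>))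
      (mYY l z - (mY l z)\<^sup>2)"
    using cell_prob_pos[OF l z]
    by (intro tendsto_prob_svar_of_sums[OF finite_measure_M avgN_tendsto tendsto_prob_n_inverse
        avgY_tendsto avgYY_tendsto]) auto
  then show ?thesis
    unfolding cvar_Y[OF z l] by (rule tendsto_prob_cong_eventually[where N=1]) (simp add: svar_cell_eq l)
qed

lemma beta_hat_tendsto:
  "tendsto_prob M (\<lambda>n \<omega>. beta_hat n (Io n \<omega>) (Zo \<omega>) (Xo \<omega>) (Yo n \<omega>) l z) (beta l z)"
proof -
  have "det (cell_prob l z *\<^sub>R VX z) \<noteq> 0"
    using det_VX_nonzero[OF z] cell_prob_pos[OF l z] scalar_invertible[of "cell_prob l z" "VX z"]
    by (simp add: invertible_det_nz)
  from tendsto_prob_matrix_inv_mult_scaled[OF finite_measure_M centred_cp_tendsto centred_cross_tendsto this]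
  show ?thesis
    unfolding beta_def using matrix_inv_mult_scaleR[OF det_VX_nonzero[OF z]] cell_prob_pos[OF l z]
    by (rule_tac tendsto_prob_cong_eventually[where N=1]) (simp_all add: beta_hat_eq l)
qed

lemma svar_residual_tendsto:
  assumes B: "tendsto_prob M B b"
  shows "tendsto_prob M (\<lambda>n \<omega>. svar (Cell n l z \<omega>) (\<lambda>i. Yo n \<omega> i - Xo \<omega> i \<bullet> B n \<omega>)) (res_var l z b)"
proof -
  note fm = finite_measure_M
  have "tendsto_prob M (\<lambda>n \<omega>. avgY l z n \<omega> - B n \<omega> \<bullet> avgX l z n \<omega>) (cell_prob l z * (mY l z - b \<bullet> mX z))"
    using tendsto_prob_diff[OF fm avgY_tendsto tendsto_prob_inner[OF fm B avgX_tendsto]]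
    by (simp add: algebra_simps)
  moreover have "tendsto_prob M (\<lambda>n \<omega>. avgYY l z n \<omega> - 2 * (B n \<omega> \<bullet> avgXY l z n \<omega>) + B n \<omega> \<bullet> (avgXX l z n \<omega> *v B n \<omega>))
      (cell_prob l z * (mYY l z - 2 * (b \<bullet> mXY l z) + b \<bullet> (mXX z *v b)))"
    using tendsto_prob_add[OF fm tendsto_prob_diff[OF fm avgYY_tendsto
        tendsto_prob_mult[OF fm tendsto_prob_const tendsto_prob_inner[OF fm B avgXY_tendsto]]]
        tendsto_prob_inner[OF fm B tendsto_prob_matrix_vector_mult[OF fm avgXX_tendsto B]]]
    by (simp add: algebra_simps scaleR_matrix_vector_assoc[symmetric])
  ultimately have "tendsto_prob M (\<lambda>n \<omega>. svar_of_sums (avgN l z n \<omega>) (1 / real n) (avgY l z n \<omega> - B n \<omega> \<bullet> avgX l z n \<omega>)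
      (avgYY l z n \<omega> - 2 * (B n \<omega> \<bullet> avgXY l z n \<omega>) + B n \<omega> \<bullet> (avgXX l z n \<omega> *v B n \<omega>))) (res_var l z b)"
    unfolding res_var_def using cell_prob_pos[OF l z]
    by (intro tendsto_prob_svar_of_sums[OF fm avgN_tendsto tendsto_prob_n_inverse]) auto
  then show ?thesis
    by (rule tendsto_prob_cong_eventually[where N=1]) (simp add: svar_residual_cell_eq l)
qed

end

context
  fixes z assumes z: "z \<in> Zs"
begin

lemma wt_tendsto: "tendsto_prob M (\<lambda>n \<omega>. wt n (Zo \<omega>) z) (pZ z)"
  using stratum_frac_tendsto[of z] unfolding wt_def .

lemma sum_cell_avg_tendsto:
  fixes F :: "nat \<Rightarrow> nat \<Rightarrow> 'a \<Rightarrow> 'b::real_normed_vector"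
  assumes "\<And>l. l < k \<Longrightarrow> tendsto_prob M (F l) (cell_prob l z *\<^sub>R c)"
  shows "tendsto_prob M (\<lambda>n \<omega>. \<Sum>l<k. F l n \<omega>) (pZ z *\<^sub>R c)"
proof -
  have "tendsto_prob M (\<lambda>n \<omega>. \<Sum>l<k. F l n \<omega>) (\<Sum>l<k. cell_prob l z *\<^sub>R c)"
    using assms by (intro tendsto_prob_sum[OF finite_measure_M]) auto
  then show ?thesis by (simp add: scaleR_sum_left[symmetric] sum_cell_prob)
qed

lemma scov_stratum_tendsto: "tendsto_prob M (\<lambda>n \<omega>. scov (Strat n z \<omega>) (Xo \<omega>)) (VX z)"
proof -
  let ?frac = "\<lambda>n \<omega>. real (card (Strat n z \<omega>)) / real n"
  have "tendsto_prob M (\<lambda>n \<omega>. (1 / (?frac n \<omega> - 1 / real n)) *\<^sub>R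
            centred_cp (?frac n \<omega>) (\<Sum>l<k. avgX l z n \<omega>) (\<Sum>l<k. avgXX l z n \<omega>))
      ((1 / (pZ z - 0)) *\<^sub>R (pZ z *\<^sub>R mXX z - (1 / pZ z) *\<^sub>R outer (pZ z *\<^sub>R mX z) (pZ z *\<^sub>R mX z)))"
    unfolding centred_cp_def using pZ_pos[OF z] finite_measure_M
    by (intro tendsto_prob_scaleR tendsto_prob_divide tendsto_prob_diff tendsto_prob_outer tendsto_prob_const
        stratum_frac_tendsto tendsto_prob_n_inverse sum_cell_avg_tendsto avgX_tendsto avgXX_tendsto z) auto
  then have "tendsto_prob M (\<lambda>n \<omega>. (1 / (?frac n \<omega> - 1 / real n)) *\<^sub>R
            centred_cp (?frac n \<omega>) (\<Sum>l<k. avgX l z n \<omega>) (\<Sum>l<k. avgXX l z n \<omega>)) (VX z)"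
    unfolding VX_def outer_scaleR using pZ_pos[OF z] by (simp add: scaleR_diff_right)
  then show ?thesis
    by (rule tendsto_prob_cong_eventually[where N=1]) (simp add: scov_stratum_eq)
qed

lemma beta_pool_tendsto:
  "tendsto_prob M (\<lambda>n \<omega>. beta_pool k n (Io n \<omega>) (Zo \<omega>) (Xo \<omega>) (Yo n \<omega>) z) (\<Sum>l<k. \<pi> l *\<^sub>R beta l z)"
proof -
  have det: "det (pZ z *\<^sub>R VX z) \<noteq> 0"
    using det_VX_nonzero[OF z] pZ_pos[OF z] scalar_invertible[of "pZ z" "VX z"] by (simp add: invertible_det_nz)
  have "tendsto_prob M (\<lambda>n \<omega>. \<Sum>l<k. centred_cp (avgN l z n \<omega>) (avgX l z n \<omega>) (avgXX l z n \<omega>)) (pZ z *\<^sub>R VX z)"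
    by (intro sum_cell_avg_tendsto centred_cp_tendsto z)
  moreover have "tendsto_prob M (\<lambda>n \<omega>. \<Sum>l<k. centred_cross (avgN l z n \<omega>) (avgY l z n \<omega>) (avgX l z n \<omega>) (avgXY l z n \<omega>))
      (pZ z *\<^sub>R (\<Sum>l<k. \<pi> l *\<^sub>R CXY l z))"
    using tendsto_prob_sum[OF finite_measure_M finite_lessThan centred_cross_tendsto[OF _ z]]
    by (simp add: scaleR_sum_right cell_prob_def mult.commute)
  ultimately have "tendsto_prob M (\<lambda>n \<omega>. beta_pool k n (Io n \<omega>) (Zo \<omega>) (Xo \<omega>) (Yo n \<omega>) z)
      (matrix_inv (pZ z *\<^sub>R VX z) *v (pZ z *\<^sub>R (\<Sum>l<k. \<pi> l *\<^sub>R CXY l z)))"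
    by (rule tendsto_prob_matrix_inv_mult_scaled[OF finite_measure_M _ _ det, THEN tendsto_prob_cong_eventually[where N=1]])
       (simp add: beta_pool_eq)
  moreover have "matrix_inv (pZ z *\<^sub>R VX z) *v (pZ z *\<^sub>R (\<Sum>l<k. \<pi> l *\<^sub>R CXY l z))
      = matrix_inv (VX z) *v (\<Sum>l<k. \<pi> l *\<^sub>R CXY l z)"
    using pZ_pos[OF z] by (intro matrix_inv_mult_scaleR det_VX_nonzero z) simp
  moreover have "matrix_inv (VX z) *v (\<Sum>l<k. \<pi> l *\<^sub>R CXY l z) = (\<Sum>l<k. \<pi> l *\<^sub>R beta l z)"
    unfolding beta_def by (simp add: linear_sum[OF matrix_vector_mul_linear] matrix_vector_mult_scaleR o_def)
  ultimately show ?thesis by simp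
qed

end

end

context stratified_trial
begin

context
  fixes t s assumes t: "t < k" and s: "s < k"
begin

lemma sigU_hat_tendsto:
  "tendsto_prob M (\<lambda>n \<omega>. sigU_hat \<pi> Zs n (Io n \<omega>) (Zo \<omega>) (Yo n \<omega>) t s) (sigU M Z0 (\<lambda>l. Y 0 l) \<pi> t s)"
proof -
  have "tendsto_prob M (\<lambda>n \<omega>. sigU_hat \<pi> Zs n (Io n \<omega>) (Zo \<omega>) (Yo n \<omega>) t s)
      (\<Sum>z\<in>Zs. pZ z * (cvar M Z0 z (Y 0 t) / \<pi> t + cvar M Z0 z (Y 0 s) / \<pi> s))"
    unfolding sigU_hat_def using pi_range t s finite_measure_M
    by (intro tendsto_prob_sum tendsto_prob_mult tendsto_prob_add tendsto_prob_divide C3_fin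
        wt_tendsto svar_cell_tendsto tendsto_prob_const) auto
  moreover have "sigU M Z0 (\<lambda>l. Y 0 l) \<pi> t s
      = (\<Sum>z\<in>Zs. pZ z * (cvar M Z0 z (Y 0 t) / \<pi> t + cvar M Z0 z (Y 0 s) / \<pi> s))"
    unfolding sigU_def by (rule integral_fun_Z0)
  ultimately show ?thesis by simp
qed

lemma sigV_hat_tendsto:
  "tendsto_prob M (\<lambda>n \<omega>. sigV_hat Zs n (Io n \<omega>) (Zo \<omega>) (Yo n \<omega>) t s) (sigV M Z0 (\<lambda>l. Y 0 l) t s)"
proof -
  let ?d = "\<lambda>n \<omega> z. Ybar n (Io n \<omega>) (Zo \<omega>) (Yo n \<omega>) t z - Ybar n (Io n \<omega>) (Zo \<omega>) (Yo n \<omega>) s z"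
  have d: "tendsto_prob M (\<lambda>n \<omega>. ?d n \<omega> z) (mY t z - mY s z)" if "z \<in> Zs" for z
    using t s that by (intro tendsto_prob_diff[OF finite_measure_M] Ybar_tendsto)
  have "tendsto_prob M (\<lambda>n \<omega>. (\<Sum>z\<in>Zs. wt n (Zo \<omega>) z * (?d n \<omega> z)\<^sup>2) - (\<Sum>z\<in>Zs. wt n (Zo \<omega>) z * ?d n \<omega> z)\<^sup>2)
      ((\<Sum>z\<in>Zs. pZ z * (mY t z - mY s z)\<^sup>2) - (\<Sum>z\<in>Zs. pZ z * (mY t z - mY s z))\<^sup>2)"
    using finite_measure_M
    by (intro tendsto_prob_diff tendsto_prob_power2 tendsto_prob_sum tendsto_prob_mult C3_fin
        wt_tendsto d) auto
  moreover have "cexp M Z0 z (\<lambda>\<omega>. Y 0 t \<omega> - Y 0 s \<omega>) = mY t z - mY s z" if "z \<in> Zs" for z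
    unfolding mY_def using integrable_Y t s by (simp add: cexp_diff[OF finite_measure_M Z0_pos[OF that]])
  then have "sigV M Z0 (\<lambda>l. Y 0 l) t s
      = (\<Sum>z\<in>Zs. pZ z * (mY t z - mY s z)\<^sup>2) - (\<Sum>z\<in>Zs. pZ z * (mY t z - mY s z))\<^sup>2"
    unfolding sigV_def pvar_fun_Z0[of "\<lambda>z. cexp M Z0 z (\<lambda>\<omega>. Y 0 t \<omega> - Y 0 s \<omega>)"]
    by (simp cong: sum.cong)
  ultimately show ?thesis unfolding sigV_hat_def theta_hat_def by simp
qed

lemma sigA_hat_tendsto:
  "tendsto_prob M (\<lambda>n \<omega>. sigA_hat \<pi> Zs n (Io n \<omega>) (Zo \<omega>) (Xo \<omega>) (Yo n \<omega>) t s) (sigA M Z0 X0 (\<lambda>l. Y 0 l) \<pi> t s)"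
proof -
  define A where "A z = res_var t z (beta t z) / \<pi> t + res_var s z (beta s z) / \<pi> s" for z
  define Q where "Q z = (beta t z - beta s z) \<bullet> (VX z *v (beta t z - beta s z))" for z
  have "tendsto_prob M (\<lambda>n \<omega>. sigA_hat \<pi> Zs n (Io n \<omega>) (Zo \<omega>) (Xo \<omega>) (Yo n \<omega>) t s) (\<Sum>z\<in>Zs. pZ z * (A z + Q z))"
    unfolding sigA_hat_def A_def Q_def add.assoc[symmetric] using pi_range t s finite_measure_M
    by (intro tendsto_prob_sum tendsto_prob_mult tendsto_prob_add tendsto_prob_divide tendsto_prob_inner
        tendsto_prob_matrix_vector_mult tendsto_prob_diff C3_fin wt_tendsto tendsto_prob_const
        scov_stratum_tendsto svar_residual_tendsto beta_hat_tendsto) auto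
  moreover have "sigA M Z0 X0 (\<lambda>l. Y 0 l) \<pi> t s = (\<Sum>z\<in>Zs. pZ z * A z) + (\<Sum>z\<in>Zs. pZ z * Q z)"
    unfolding sigA_def A_def Q_def
    by (intro arg_cong2[where f="(+)"]; rule trans[OF integral_fun_Z0]; intro sum.cong refl)
       (simp_all add: beta_pop_eq_beta cvar_residual cvar_vec_X t s)
  ultimately show ?thesis by (simp add: sum.distrib distrib_left)
qed

lemma sigB_hat_tendsto:
  "tendsto_prob M (\<lambda>n \<omega>. sigB_hat k \<pi> Zs n (Io n \<omega>) (Zo \<omega>) (Xo \<omega>) (Yo n \<omega>) t s) (sigB M Z0 X0 (\<lambda>l. Y 0 l) \<pi> k t s)"
proof -
  define bb where "bb z = (\<Sum>l<k. \<pi> l *\<^sub>R beta l z)" for z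
  define A where "A z = res_var t z (bb z) / \<pi> t + res_var s z (bb z) / \<pi> s" for z
  have "tendsto_prob M (\<lambda>n \<omega>. sigB_hat k \<pi> Zs n (Io n \<omega>) (Zo \<omega>) (Xo \<omega>) (Yo n \<omega>) t s) (\<Sum>z\<in>Zs. pZ z * A z)"
    unfolding sigB_hat_def A_def bb_def using pi_range t s finite_measure_M
    by (intro tendsto_prob_sum tendsto_prob_mult tendsto_prob_add tendsto_prob_divide C3_fin
        wt_tendsto tendsto_prob_const svar_residual_tendsto beta_pool_tendsto) auto
  moreover have "sigB M Z0 X0 (\<lambda>l. Y 0 l) \<pi> k t s = (\<Sum>z\<in>Zs. pZ z * A z)"
    unfolding sigB_def A_def bb_def
    by (rule trans[OF integral_fun_Z0], intro sum.cong refl) (simp add: beta_bar_eq cvar_residual t s)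
  ultimately show ?thesis by simp
qed

end

end

theorem mainTheorem4:
  fixes M :: "'a measure" and Wsp :: "'w measure"
    and k :: nat and \<pi> :: "nat \<Rightarrow> real"
    and Y :: "nat \<Rightarrow> nat \<Rightarrow> 'a \<Rightarrow> real"
    and W :: "nat \<Rightarrow> 'a \<Rightarrow> 'w"
    and gZ :: "'w \<Rightarrow> 'z" and Zs :: "'z set"
    and gX :: "'w \<Rightarrow> real^'p"
    and I :: "nat \<Rightarrow> nat \<Rightarrow> 'a \<Rightarrow> nat"
    and s t :: nat
  assumes P: "prob_space M"
    and k2: "k \<ge> 2"
    and pi_range: "\<forall>l<k. 0 < \<pi> l \<and> \<pi> l < 1"
    and pi_sum: "(\<Sum>l<k. \<pi> l) = 1"
    and st: "s < k" "t < k" "s \<noteq> t"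
    and meas_Y: "\<forall>i l. l < k \<longrightarrow> Y i l \<in> borel_measurable M"
    and meas_W: "\<forall>i. W i \<in> measurable M Wsp"
    and meas_gZ: "gZ \<in> measurable Wsp (count_space UNIV)"
    and meas_gX: "gX \<in> borel_measurable Wsp"
    and meas_I: "\<forall>n i. I n i \<in> measurable M (count_space UNIV)"
    and I_range: "\<forall>n i. \<forall>\<omega>\<in>space M. i < n \<longrightarrow> I n i \<omega> < k"
    \<comment> \<open>(C1)\<close>
    and C1_indep: "prob_space.indep_vars M (\<lambda>_. pspace k Wsp) (pvec k Y W) UNIV"
    and C1_ident: "\<forall>i. distr M (pspace k Wsp) (pvec k Y W i) = distr M (pspace k Wsp) (pvec k Y W 0)"
    and C1_mom: "\<forall>l<k. integrable M (\<lambda>\<omega>. (Y 0 l \<omega>)\<^sup>2)"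
    \<comment> \<open>(C2): conditional independence given the discrete vector (Z_1,...,Z_n)\<close>
    and C2: "\<forall>n (a :: nat \<Rightarrow> nat) (zs :: nat \<Rightarrow> 'z) B.
       B \<in> sets (\<Pi>\<^sub>M i\<in>{..<n}. pspace k Wsp) \<longrightarrow>
       (let EI = {\<omega> \<in> space M. \<forall>i<n. I n i \<omega> = a i};
            ED = {\<omega> \<in> space M. (\<lambda>i\<in>{..<n}. pvec k Y W i \<omega>) \<in> B};
            EZ = {\<omega> \<in> space M. \<forall>i<n. gZ (W i \<omega>) = zs i}
        in measure M (EI \<inter> ED \<inter> EZ) * measure M EZ = measure M (EI \<inter> EZ) * measure M (ED \<inter> EZ))"
    \<comment> \<open>(C3)\<close>
    and C3_fin: "finite Zs"
    and C3_vals: "gZ ` space Wsp \<subseteq> Zs"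
    and C3_pos: "\<forall>z\<in>Zs. measure M {\<omega> \<in> space M. gZ (W 0 \<omega>) = z} > 0"
    and C3_prob: "\<forall>n i l (zs :: nat \<Rightarrow> 'z). i < n \<longrightarrow> l < k \<longrightarrow>
       measure M {\<omega> \<in> space M. I n i \<omega> = l \<and> (\<forall>j<n. gZ (W j \<omega>) = zs j)}
         = \<pi> l * measure M {\<omega> \<in> space M. \<forall>j<n. gZ (W j \<omega>) = zs j}"
    and C3_bal: "\<forall>z\<in>Zs. \<forall>l<k. conv_in_prob M
       (\<lambda>n \<omega>. (real (card (cell n (\<lambda>i. I n i \<omega>) (\<lambda>i. gZ (W i \<omega>)) l z))
                 - \<pi> l * real (card (stratum n (\<lambda>i. gZ (W i \<omega>)) z)))
                / real (card (stratum n (\<lambda>i. gZ (W i \<omega>)) z))) 0"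
    \<comment> \<open>moment conditions on X and X Y^(l)\<close>
    and mom_X: "integrable M (\<lambda>\<omega>. (norm (gX (W 0 \<omega>)))\<^sup>2)"
    and mom_XY: "\<forall>l<k. integrable M (\<lambda>\<omega>. (norm (Y 0 l \<omega> *\<^sub>R gX (W 0 \<omega>)))\<^sup>2)"
    and posdef: "\<forall>z\<in>Zs. pos_def (cvar_vec M (\<lambda>\<omega>. gZ (W 0 \<omega>)) z (\<lambda>\<omega>. gX (W 0 \<omega>)))"
  shows
    "conv_in_prob M
       (\<lambda>n \<omega>. sigU_hat \<pi> Zs n (\<lambda>i. I n i \<omega>) (\<lambda>i. gZ (W i \<omega>)) (\<lambda>i. Y i (I n i \<omega>) \<omega>) t s)
       (sigU M (\<lambda>\<omega>. gZ (W 0 \<omega>)) (\<lambda>l. Y 0 l) \<pi> t s)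
     \<and> conv_in_prob M
       (\<lambda>n \<omega>. sigV_hat Zs n (\<lambda>i. I n i \<omega>) (\<lambda>i. gZ (W i \<omega>)) (\<lambda>i. Y i (I n i \<omega>) \<omega>) t s)
       (sigV M (\<lambda>\<omega>. gZ (W 0 \<omega>)) (\<lambda>l. Y 0 l) t s)
     \<and> conv_in_prob M
       (\<lambda>n \<omega>. sigA_hat \<pi> Zs n (\<lambda>i. I n i \<omega>) (\<lambda>i. gZ (W i \<omega>)) (\<lambda>i. gX (W i \<omega>))
                 (\<lambda>i. Y i (I n i \<omega>) \<omega>) t s)
       (sigA M (\<lambda>\<omega>. gZ (W 0 \<omega>)) (\<lambda>\<omega>. gX (W 0 \<omega>)) (\<lambda>l. Y 0 l) \<pi> t s)
     \<and> conv_in_prob M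
       (\<lambda>n \<omega>. sigB_hat k \<pi> Zs n (\<lambda>i. I n i \<omega>) (\<lambda>i. gZ (W i \<omega>)) (\<lambda>i. gX (W i \<omega>))
                 (\<lambda>i. Y i (I n i \<omega>) \<omega>) t s)
       (sigB M (\<lambda>\<omega>. gZ (W 0 \<omega>)) (\<lambda>\<omega>. gX (W 0 \<omega>)) (\<lambda>l. Y 0 l) \<pi> k t s)"
proof -
  interpret stratified_trial M Wsp k \<pi> Y W gZ Zs gX I
    by (rule stratified_trial.intro) fact+
  have t: "t < k" and s: "s < k" using st by auto
  show ?thesis
    using tendsto_prob_imp_conv_in_prob[OF finite_measure_M sigU_hat_tendsto[OF t s]]
      tendsto_prob_imp_conv_in_prob[OF finite_measure_M sigV_hat_tendsto[OF t s]]
      tendsto_prob_imp_conv_in_prob[OF finite_measure_M sigA_hat_tendsto[OF t s]]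
      tendsto_prob_imp_conv_in_prob[OF finite_measure_M sigB_hat_tendsto[OF t s]]
    by blast
qed

end
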